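(* Let $H$ be a separable Hilbert space, let $(X_t)_{t\geq 1}$ be an $H$-valued process and $(\epsilon_t)_{t\geq1}$ a real-valued process, and let $(\mathcal{F}_t)_{t\geq 0}$ be a filtration such that for all $t\geq 1$: $X_t$ is $\mathcal{F}_{t-1}$-measurable, $\epsilon_t$ is $\mathcal{F}_t$-measurable, and $\mathbb{E}[\epsilon_t\mid\mathcal{F}_{t-1}]=0$. Fix $\rho>0$ and set $V_t=\sum_{i\leq t}X_iX_i^T$, $M_t=\sum_{i\le t}X_i\epsilon_i$, and $G_t=(\rho I+V_t)^{-1/2}X_t$. For $\lambda>0$ let $$e_t(\lambda)=\|G_t\|^2\,\mathbb{E}\big[\exp(\lambda|\epsilon_t|)-\lambda|\epsilon_t|-1\,\big|\,\mathcal{F}_{t-1}\big].$$ Then the process $$S_t=\cosh\Big(\lambda\big\|(\rho I+V_t)^{-1/2}M_t\big\|\Big)\exp\Big(-\sum_{i\leq t}e_i(\lambda)\Big)$$ is a nonnegative supermartingale with respect to $(\mathcal{F}_t)$.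
   Context: For $f,g\in H$, $fg^T$ denotes the operator $f\langle g,\cdot\rangle$ on $H$, and $I$ is the identity operator on $H$. *)

theory Defs
  imports "HOL-Probability.Probability"
begin

definition outer_op :: "'h::real_inner \<Rightarrow> 'h \<Rightarrow> ('h \<Rightarrow> 'h)" where
  "outer_op f g = (\<lambda>v. inner g v *\<^sub>R f)"

definition op_sqrt :: "('h::real_inner \<Rightarrow> 'h) \<Rightarrow> ('h \<Rightarrow> 'h)" where
  "op_sqrt T = (THE S. bounded_linear S \<and> (\<forall>u v. inner (S u) v = inner u (S v))
                   \<and> (\<forall>u. 0 \<le> inner u (S u)) \<and> S \<circ> S = T)"

definition inv_sqrt_op :: "real \<Rightarrow> ('h::real_inner \<Rightarrow> 'h) \<Rightarrow> ('h \<Rightarrow> 'h)" where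
  "inv_sqrt_op \<rho> T = inv (op_sqrt (\<lambda>v. \<rho> *\<^sub>R v + T v))"

definition Vop :: "(nat \<Rightarrow> 'a \<Rightarrow> 'h::real_inner) \<Rightarrow> nat \<Rightarrow> 'a \<Rightarrow> ('h \<Rightarrow> 'h)" where
  "Vop X t \<omega> = (\<lambda>v. \<Sum>i\<in>{1..t}. outer_op (X i \<omega>) (X i \<omega>) v)"

definition Mvec :: "(nat \<Rightarrow> 'a \<Rightarrow> 'h::real_inner) \<Rightarrow> (nat \<Rightarrow> 'a \<Rightarrow> real) \<Rightarrow> nat \<Rightarrow> 'a \<Rightarrow> 'h" where
  "Mvec X \<epsilon> t \<omega> = (\<Sum>i\<in>{1..t}. \<epsilon> i \<omega> *\<^sub>R X i \<omega>)"

definition Gvec :: "real \<Rightarrow> (nat \<Rightarrow> 'a \<Rightarrow> 'h::real_inner) \<Rightarrow> nat \<Rightarrow> 'a \<Rightarrow> 'h" where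
  "Gvec \<rho> X t \<omega> = inv_sqrt_op \<rho> (Vop X t \<omega>) (X t \<omega>)"

definition e_term :: "'a measure \<Rightarrow> (nat \<Rightarrow> 'a measure) \<Rightarrow> real \<Rightarrow> (nat \<Rightarrow> 'a \<Rightarrow> 'h::real_inner)
    \<Rightarrow> (nat \<Rightarrow> 'a \<Rightarrow> real) \<Rightarrow> real \<Rightarrow> nat \<Rightarrow> 'a \<Rightarrow> ennreal" where
  "e_term M F \<rho> X \<epsilon> lam t \<omega> =
     ennreal ((norm (Gvec \<rho> X t \<omega>))\<^sup>2) *
     nn_cond_exp M (F (t - 1))
       (\<lambda>y. ennreal (exp (lam * \<bar>\<epsilon> t y\<bar>) - lam * \<bar>\<epsilon> t y\<bar> - 1)) \<omega>"

text \<open>S_t = cosh(lambda ||(rho I+V_t)^(-1/2) M_t||) exp(-sum_{i<=t} e_i(lambda)),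
  where exp(-\<infinity>) = 0.\<close>
definition S_proc :: "'a measure \<Rightarrow> (nat \<Rightarrow> 'a measure) \<Rightarrow> real \<Rightarrow> (nat \<Rightarrow> 'a \<Rightarrow> 'h::real_inner)
    \<Rightarrow> (nat \<Rightarrow> 'a \<Rightarrow> real) \<Rightarrow> real \<Rightarrow> nat \<Rightarrow> 'a \<Rightarrow> real" where
  "S_proc M F \<rho> X \<epsilon> lam t \<omega> =
     (let E = (\<Sum>i\<in>{1..t}. e_term M F \<rho> X \<epsilon> lam i \<omega>)
      in cosh (lam * norm (inv_sqrt_op \<rho> (Vop X t \<omega>) (Mvec X \<epsilon> t \<omega>)))
         * (if E = \<infinity> then 0 else exp (- enn2real E)))"

definition is_filtration :: "'a measure \<Rightarrow> (nat \<Rightarrow> 'a measure) \<Rightarrow> bool" where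
  "is_filtration M F \<longleftrightarrow> (\<forall>t. subalgebra M (F t)) \<and> (\<forall>s t. s \<le> t \<longrightarrow> sets (F s) \<subseteq> sets (F t))"

definition supermartingale :: "'a measure \<Rightarrow> (nat \<Rightarrow> 'a measure) \<Rightarrow> (nat \<Rightarrow> 'a \<Rightarrow> real) \<Rightarrow> bool" where
  "supermartingale M F S \<longleftrightarrow>
     (\<forall>t. S t \<in> borel_measurable (F t)) \<and> (\<forall>t. integrable M (S t)) \<and>
     (\<forall>s t. s \<le> t \<longrightarrow> (AE \<omega> in M. real_cond_exp M (F s) (S t) \<omega> \<le> S s \<omega>))"

end

theory Submission
  imports Defs
begin

text \<open>
  Write \<open>Q\<^sub>t u = \<langle>(\<rho> I + V\<^sub>t)\<^sup>-\<^sup>1 u, u\<rangle>\<close>. The coercive operator \<open>\<rho> I + V\<^sub>t\<close> has a unique positive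
  square root (the binomial series of \<open>sqrt (1 - x)\<close> evaluated at a rescaled copy of the operator,
  which converges because the space is complete), so \<open>\<parallel>(\<rho> I + V\<^sub>t)\<^sup>-\<^sup>1\<^sup>/\<^sup>2 u\<parallel>\<^sup>2 = Q\<^sub>t u\<close>. The inverse
  itself is given by the Sherman--Morrison recursion, which also shows \<open>Q\<^sub>t\<^sub>+\<^sub>1 \<le> Q\<^sub>t\<close> and
  \<open>\<parallel>G\<^sub>t\<^sub>+\<^sub>1\<parallel> \<le> 1\<close>.

  Since \<open>M\<^sub>t\<^sub>+\<^sub>1 = M\<^sub>t + \<epsilon>\<^sub>t\<^sub>+\<^sub>1 X\<^sub>t\<^sub>+\<^sub>1\<close>, convexity of \<open>q \<mapsto> cosh (sqrt q)\<close> gives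
  \<open>cosh (\<lambda> sqrt (Q\<^sub>t\<^sub>+\<^sub>1 M\<^sub>t\<^sub>+\<^sub>1)) \<le> cosh (\<lambda> sqrt (Q\<^sub>t M\<^sub>t)) (1 + \<parallel>G\<^sub>t\<^sub>+\<^sub>1\<parallel>\<^sup>2 \<phi> (\<lambda> \<bar>\<epsilon>\<^sub>t\<^sub>+\<^sub>1\<bar>)) + \<epsilon>\<^sub>t\<^sub>+\<^sub>1 D\<^sub>t\<close>
  with \<open>\<phi> z = exp z - z - 1\<close> and an \<open>F\<^sub>t\<close>-measurable \<open>D\<^sub>t\<close>. Conditioning on \<open>F\<^sub>t\<close> removes the last
  term since \<open>E[\<epsilon>\<^sub>t\<^sub>+\<^sub>1 | F\<^sub>t] = 0\<close> (splitting into positive and negative parts, so that no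
  integrability of \<open>D\<^sub>t \<epsilon>\<^sub>t\<^sub>+\<^sub>1\<close> is needed), and turns the factor into
  \<open>1 + e\<^sub>t\<^sub>+\<^sub>1(\<lambda>) \<le> exp (e\<^sub>t\<^sub>+\<^sub>1(\<lambda>))\<close>, which the compensator \<open>exp (- \<Sum>\<^sub>i\<^sub>\<le>\<^sub>t\<^sub>+\<^sub>1 e\<^sub>i(\<lambda>))\<close> absorbs.
  Integrability follows from \<open>E S\<^sub>t \<le> S\<^sub>0 = 1\<close>.
\<close>

lemma exp_minus_linear_scale_le:
  fixes g z :: real
  assumes "0 \<le> g" "g \<le> 1" "0 \<le> z"
  shows "exp (g * z) - g * z - 1 \<le> g\<^sup>2 * (exp z - z - 1)"
proof -
  have tail: "(\<lambda>n. x ^ (n + 2) /\<^sub>R fact (n + 2)) sums (exp x - x - 1)" for x :: real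
  proof -
    have "summable (\<lambda>n. x ^ (n + 2) /\<^sub>R fact (n + 2))"
      using summable_ignore_initial_segment[OF summable_exp_generic[of x], of 2] by simp
    moreover have "(\<Sum>n. x ^ (n + 2) /\<^sub>R fact (n + 2)) = exp x - x - 1"
      using exp_first_two_terms[of x] by linarith
    ultimately show ?thesis
      by (metis summable_sums)
  qed
  show ?thesis
  proof (rule sums_le[OF _ tail sums_mult[OF tail]])
    fix n
    have "g ^ (n + 2) \<le> g\<^sup>2"
      using assms by (intro power_decreasing) auto
    then have "g ^ (n + 2) * z ^ (n + 2) / fact (n + 2) \<le> g\<^sup>2 * z ^ (n + 2) / fact (n + 2)"
      using assms by (intro divide_right_mono mult_right_mono) auto
    then show "(g * z) ^ (n + 2) /\<^sub>R fact (n + 2) \<le> g\<^sup>2 * (z ^ (n + 2) /\<^sub>R fact (n + 2))"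
      by (simp add: power_mult_distrib divide_inverse_commute mult_ac)
  qed
qed

lemma convex_on_cosh_sqrt: "convex_on {0::real..} (\<lambda>q. cosh (sqrt q))"
proof (rule convex_onI)
  show "convex {0::real..}"
    by simp
  fix t x y :: real
  assume t: "0 < t" "t < 1" and xy: "x \<in> {0..}" "y \<in> {0..}"
  let ?c = "\<lambda>q n. if even n then q ^ (n div 2) / fact n else 0 :: real"
  have series: "(\<lambda>n. ?c q n) sums cosh (sqrt q)" if "0 \<le> q" for q
  proof -
    have "sqrt q ^ n /\<^sub>R fact n = q ^ (n div 2) / fact n" if "even n" for n
      using that \<open>0 \<le> q\<close> by (auto simp: power_mult divide_inverse_commute elim!: evenE)
    then show ?thesis
      using cosh_converges[of "sqrt q"] by (simp cong: if_cong)
  qed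
  have power_convex: "convex_on {0::real..} (\<lambda>x. x ^ k)" for k
    by (cases "even k") (auto intro: convex_power_odd convex_on_subset[OF convex_power_even])
  let ?z = "(1 - t) *\<^sub>R x + t *\<^sub>R y"
  show "cosh (sqrt ?z) \<le> (1 - t) * cosh (sqrt x) + t * cosh (sqrt y)"
  proof (rule sums_le[OF _ series sums_add[OF sums_mult[OF series] sums_mult[OF series]]])
    fix n
    have "?z ^ (n div 2) \<le> (1 - t) * x ^ (n div 2) + t * y ^ (n div 2)"
      using convex_onD[OF power_convex, of t x y] t xy by simp
    then show "?c ?z n \<le> (1 - t) * ?c x n + t * ?c y n"
      by (simp add: add_divide_distrib[symmetric] divide_right_mono)
  qed (use t xy in auto)
qed

lemma cosh_add_le:
  fixes a s :: real
  assumes "0 \<le> a"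
  shows "cosh (a + s) \<le> cosh a + s * sinh a + cosh a * (exp \<bar>s\<bar> - \<bar>s\<bar> - 1)"
proof -
  have "0 \<le> sinh \<bar>s\<bar> - \<bar>s\<bar>"
    using real_le_x_sinh[of "\<bar>s\<bar>"] by (simp add: sinh_def exp_minus)
  moreover from this have "sinh s - s \<le> sinh \<bar>s\<bar> - \<bar>s\<bar>"
    by (cases "0 \<le> s") (auto simp: abs_if)
  moreover have "0 \<le> sinh a" "sinh a \<le> cosh a"
    using assms by (auto simp: sinh_le_cosh_real)
  ultimately have "sinh a * (sinh s - s) \<le> cosh a * (sinh \<bar>s\<bar> - \<bar>s\<bar>)"
    by (meson mult_left_mono mult_right_mono order_trans)
  moreover have "cosh (a + s) = cosh a + s * sinh a + cosh a * (cosh \<bar>s\<bar> - 1) + sinh a * (sinh s - s)"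
    by (simp add: cosh_add algebra_simps)
  moreover have "cosh a * (cosh \<bar>s\<bar> + sinh \<bar>s\<bar>) = cosh a * exp \<bar>s\<bar>"
    by (simp only: cosh_plus_sinh)
  ultimately show ?thesis
    by (simp add: algebra_simps)
qed

text \<open>Writing \<open>a\<^sup>2 + 2 a \<alpha> + \<tau>\<^sup>2\<close> as a convex combination of \<open>(a - \<tau>)\<^sup>2\<close> and \<open>(a + \<tau>)\<^sup>2\<close>,
  convexity of \<open>cosh \<circ> sqrt\<close> reduces the claim to \<open>cosh_add_le\<close> at \<open>s = \<plusminus>\<tau>\<close>.\<close>
lemma cosh_sqrt_quadratic_le:
  fixes a \<alpha> \<tau> :: real
  assumes "0 \<le> a" and "\<bar>\<alpha>\<bar> \<le> \<tau>"
  shows "cosh (sqrt (a\<^sup>2 + 2 * a * \<alpha> + \<tau>\<^sup>2)) \<le> cosh a + \<alpha> * sinh a + cosh a * (exp \<tau> - \<tau> - 1)"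
proof (cases "\<tau> = 0")
  case True
  with assms show ?thesis by simp
next
  case False
  with assms have "\<tau> > 0" by linarith
  define \<theta> where "\<theta> = (\<alpha> + \<tau>) / (2 * \<tau>)"
  have \<theta>: "0 \<le> \<theta>" "\<theta> \<le> 1" "(2 * \<theta> - 1) * \<tau> = \<alpha>"
    using assms \<open>\<tau> > 0\<close> by (auto simp: \<theta>_def field_simps)
  have "a\<^sup>2 + 2 * a * \<alpha> + \<tau>\<^sup>2 = (1 - \<theta>) *\<^sub>R (a - \<tau>)\<^sup>2 + \<theta> *\<^sub>R (a + \<tau>)\<^sup>2"
    using \<open>\<tau> > 0\<close> by (simp add: \<theta>_def field_simps power2_eq_square)
  then have "cosh (sqrt (a\<^sup>2 + 2 * a * \<alpha> + \<tau>\<^sup>2))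
      \<le> (1 - \<theta>) * cosh (sqrt ((a - \<tau>)\<^sup>2)) + \<theta> * cosh (sqrt ((a + \<tau>)\<^sup>2))"
    using convex_onD[OF convex_on_cosh_sqrt, of \<theta> "(a - \<tau>)\<^sup>2" "(a + \<tau>)\<^sup>2"] \<theta> by simp
  also have "\<dots> = (1 - \<theta>) * cosh (a + - \<tau>) + \<theta> * cosh (a + \<tau>)"
    using assms \<open>\<tau> > 0\<close> by simp
  also have "\<dots> \<le> (1 - \<theta>) * (cosh a + - \<tau> * sinh a + cosh a * (exp \<tau> - \<tau> - 1))
                 + \<theta> * (cosh a + \<tau> * sinh a + cosh a * (exp \<tau> - \<tau> - 1))"
    using cosh_add_le[OF assms(1), of "- \<tau>"] cosh_add_le[OF assms(1), of \<tau>] \<theta> \<open>\<tau> > 0\<close>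
    by (intro add_mono mult_left_mono) auto
  also have "\<dots> = cosh a + ((2 * \<theta> - 1) * \<tau>) * sinh a + cosh a * (exp \<tau> - \<tau> - 1)"
    by (simp add: algebra_simps)
  finally show ?thesis
    unfolding \<theta>(3) .
qed

lemma norm_summable_on_pairs:
  fixes g :: "nat \<times> nat \<Rightarrow> 'a::real_normed_vector"
  assumes bound: "\<And>i j. norm (g (i, j)) \<le> \<alpha> i * \<beta> j"
    and "summable \<alpha>" "summable \<beta>" "\<And>i. 0 \<le> \<alpha> i" "\<And>j. 0 \<le> \<beta> j"
  shows "(\<lambda>x. norm (g x)) summable_on UNIV"
proof -
  have "((\<lambda>j. \<alpha> i * \<beta> j) has_sum \<alpha> i * suminf \<beta>) UNIV" for i
    using assms by (intro sums_nonneg_imp_has_sum sums_mult summable_sums) auto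
  moreover have "(\<lambda>i. \<alpha> i * suminf \<beta>) summable_on UNIV"
    using assms by (intro summable_nonneg_imp_summable_on_strong summable_mult2 always_eventually allI
        mult_nonneg_nonneg suminf_nonneg) auto
  ultimately have "(\<lambda>(i, j). \<alpha> i * \<beta> j) summable_on (SIGMA i:UNIV. UNIV)"
    using assms by (intro summable_on_SigmaI[where g = "\<lambda>i. \<alpha> i * suminf \<beta>"]) auto
  then have "(\<lambda>(i, j). \<alpha> i * \<beta> j) summable_on UNIV"
    by simp
  then show ?thesis
    by (rule summable_on_comparison_test) (use bound in auto)
qed

text \<open>The library's comparison test needs the sort \<open>banach\<close>, which a type of sort
  \<open>{real_inner, complete_space}\<close> does not have.\<close>
lemma summable_comparison_complete:
  fixes f :: "nat \<Rightarrow> 'a::{real_normed_vector, complete_space}"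
  assumes bound: "\<And>n. norm (f n) \<le> g n" and g: "summable g"
  shows "summable f"
proof (rule summable_bounded_partials[where g = "\<lambda>a. \<Sum>k. g (k + Suc a)"])
  have tail: "(\<Sum>k. g (k + Suc a)) = suminf g - (\<Sum>k<Suc a. g k)" for a
    using suminf_split_initial_segment[OF g, of "Suc a"] by linarith
  have "(\<lambda>a. suminf g - (\<Sum>k<Suc a. g k)) \<longlonglongrightarrow> suminf g - suminf g"
    using g by (intro tendsto_diff tendsto_const LIMSEQ_Suc summable_LIMSEQ)
  then show "(\<lambda>a. \<Sum>k. g (k + Suc a)) \<longlonglongrightarrow> 0"
    unfolding tail by simp
  show "\<forall>\<^sub>F x0 in sequentially. \<forall>a\<ge>x0. \<forall>b>a. norm (sum f {a<..b}) \<le> (\<Sum>k. g (k + Suc a))"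
  proof (intro always_eventually allI impI)
    fix a b :: nat
    have "norm (sum f {a<..b}) \<le> sum g {a<..b}"
      using bound by (rule sum_norm_le)
    also have "sum g {a<..b} = (\<Sum>k<b - a. g (k + Suc a))"
      by (rule sum.reindex_bij_witness[of _ "\<lambda>k. k + Suc a" "\<lambda>k. k - Suc a"]) auto
    also have "\<dots> \<le> (\<Sum>k. g (k + Suc a))"
      using bound by (intro sum_le_suminf summable_ignore_initial_segment g) (auto intro: order_trans[OF norm_ge_zero])
    finally show "norm (sum f {a<..b}) \<le> (\<Sum>k. g (k + Suc a))" .
  qed
qed

lemma sums_antidiagonals:
  fixes g :: "nat \<times> nat \<Rightarrow> 'a::banach"
  assumes "(\<lambda>x. norm (g x)) summable_on UNIV"
  shows "(\<lambda>k. \<Sum>i\<le>k. g (i, k - i)) sums (\<Sum>i. \<Sum>j. g (i, j))"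
proof -
  have iterated: "(\<lambda>x. infsum (\<lambda>y. f (x, y)) (B x)) sums infsum f (SIGMA x:UNIV. B x)"
    if "f summable_on (SIGMA x:UNIV. B x)" for f :: "nat \<times> nat \<Rightarrow> 'a" and B
  proof -
    have "(\<lambda>x. infsum (\<lambda>y. f (x, y)) (B x)) summable_on UNIV"
      using summable_on_Sigma_banach[of "\<lambda>x y. f (x, y)"] that by simp
    then show ?thesis
      by (metis has_sum_infsum has_sum_imp_sums infsum_Sigma_banach[OF that])
  qed
  have g: "g summable_on (SIGMA i:UNIV. UNIV)"
    using abs_summable_summable[OF assms] by simp
  have rows: "(\<lambda>j. g (i, j)) sums infsum (\<lambda>j. g (i, j)) UNIV" for i
  proof -
    have "g summable_on Pair i ` UNIV"
      using g by (rule summable_on_subset_banach) auto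
    then have "(\<lambda>j. g (i, j)) summable_on UNIV"
      by (subst (asm) summable_on_reindex) (auto simp: o_def inj_on_def)
    then show ?thesis
      by (intro has_sum_imp_sums has_sum_infsum)
  qed
  have "bij_betw (\<lambda>(k, i). (i, k - i)) (SIGMA k:UNIV. {..k::nat}) UNIV"
    by (rule bij_betw_byWitness[where f' = "\<lambda>(i, j). (i + j, i)"]) auto
  note reindex = summable_on_reindex_bij_betw[OF this, of g] infsum_reindex_bij_betw[OF this, of g]
  have "(\<lambda>(k, i). g (i, k - i)) summable_on (SIGMA k:UNIV. {..k})"
    using reindex(1) g by (simp add: case_prod_beta')
  from iterated[OF this] have "(\<lambda>k. \<Sum>i\<le>k. g (i, k - i)) sums infsum g UNIV"
    using reindex(2) by (simp add: case_prod_beta')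
  moreover have "(\<Sum>i. \<Sum>j. g (i, j)) = infsum g UNIV"
    using iterated[OF g] rows by (simp add: sums_iff)
  ultimately show ?thesis
    by simp
qed

text \<open>The Taylor coefficients of \<open>sqrt (1 - x)\<close>.\<close>
definition sqrt_coeff :: "nat \<Rightarrow> real" where
  "sqrt_coeff n = (-1) ^ n * ((1/2) gchoose n)"

lemma sqrt_coeff_0 [simp]: "sqrt_coeff 0 = 1"
  by (simp add: sqrt_coeff_def)

lemma sqrt_coeff_Suc: "sqrt_coeff (Suc k) = sqrt_coeff k * ((real k - 1/2) / (real k + 1))"
proof -
  have "(real k + 1) * ((1/2::real) gchoose (Suc k)) = ((1/2) gchoose k) * (1/2 - real k)"
    using gbinomial_mult_1[of "1/2::real" k] by (simp add: algebra_simps)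
  then have g: "(1/2::real) gchoose (Suc k) = ((1/2) gchoose k) * (1/2 - real k) / (real k + 1)"
    by (simp add: field_simps)
  show ?thesis
    unfolding sqrt_coeff_def g by (simp add: field_simps)
qed

lemma abs_sqrt_coeff_le_1: "\<bar>sqrt_coeff n\<bar> \<le> 1"
proof (induction n)
  case (Suc k)
  have "\<bar>(real k - 1/2) / (real k + 1)\<bar> \<le> 1"
    by (simp add: abs_le_iff field_simps)
  with Suc have "\<bar>sqrt_coeff k\<bar> * \<bar>(real k - 1/2) / (real k + 1)\<bar> \<le> 1 * 1"
    by (intro mult_mono) auto
  then show ?case
    by (simp add: sqrt_coeff_Suc abs_mult)
qed simp

lemma sqrt_coeff_nonpos: "n \<ge> 1 \<Longrightarrow> sqrt_coeff n \<le> 0"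
proof (induction n)
  case (Suc k)
  show ?case
  proof (cases "k = 0")
    case False
    with Suc have "sqrt_coeff k * (real k - 1/2) \<le> 0"
      by (intro mult_nonpos_nonneg) auto
    then show ?thesis
      by (simp add: sqrt_coeff_Suc divide_nonpos_pos)
  qed (simp add: sqrt_coeff_Suc)
qed simp

lemma sqrt_coeff_convolution:
  "(\<Sum>i\<le>k. sqrt_coeff i * sqrt_coeff (k - i)) = (if k = 0 then 1 else if k = 1 then -1 else 0)"
proof -
  have "(\<Sum>i\<le>k. sqrt_coeff i * sqrt_coeff (k - i)) = (-1) ^ k * (\<Sum>i\<le>k. ((1/2::real) gchoose i) * ((1/2) gchoose (k - i)))"
    unfolding sum_distrib_left sqrt_coeff_def
    by (intro sum.cong refl) (simp add: power_add[symmetric] algebra_simps)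
  also have "(\<Sum>i\<le>k. ((1/2::real) gchoose i) * ((1/2) gchoose (k - i))) = (1/2 + 1/2) gchoose k"
    using gbinomial_Vandermonde[of "1/2::real" "1/2" k] by (simp add: atMost_atLeast0)
  also have "(1/2 + 1/2 :: real) gchoose k = of_nat (1 choose k)"
    using binomial_gbinomial[of 1 k, where 'a=real] by simp
  finally show ?thesis
    by (cases k; cases "k - 1") auto
qed

lemma sums_sqrt_coeff:
  assumes "0 \<le> x" "x < 1"
  shows "(\<lambda>n. sqrt_coeff n * x ^ n) sums sqrt (1 - x)"
proof -
  have "(\<lambda>n. ((1/2::real) gchoose n) * (- x) ^ n) sums (1 + - x) powr (1/2)"
    using assms by (intro gen_binomial_real) auto
  then show ?thesis
    using assms by (simp add: sqrt_coeff_def power_minus' powr_half_sqrt algebra_simps)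
qed

section \<open>Square roots of coercive operators\<close>

definition positive_op :: "('h::real_inner \<Rightarrow> 'h) \<Rightarrow> bool" where
  "positive_op S \<longleftrightarrow> bounded_linear S \<and> (\<forall>u v. inner (S u) v = inner u (S v)) \<and> (\<forall>u. 0 \<le> inner u (S u))"

lemma positive_opD:
  assumes "positive_op S"
  shows "bounded_linear S" "inner (S u) v = inner u (S v)" "0 \<le> inner u (S u)"
  using assms by (auto simp: positive_op_def)

lemma positive_op_cauchy_schwarz:
  assumes "positive_op P"
  shows "(inner x (P y))\<^sup>2 \<le> inner x (P x) * inner y (P y)"
proof -
  note P = positive_opD[OF assms]
  interpret P: bounded_linear P by (rule P(1))
  have quadratic: "0 \<le> inner x (P x) + 2 * r * inner x (P y) + r\<^sup>2 * inner y (P y)" for r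
  proof -
    have "inner y (P x) = inner x (P y)"
      using P(2) by (metis inner_commute)
    then have "inner (x + r *\<^sub>R y) (P (x + r *\<^sub>R y))
        = inner x (P x) + 2 * r * inner x (P y) + r\<^sup>2 * inner y (P y)"
      by (simp add: P.add P.scaleR inner_add_left inner_add_right power2_eq_square algebra_simps)
    with P(3) show ?thesis
      by metis
  qed
  show ?thesis
  proof (cases "inner y (P y) = 0")
    case True
    have "inner x (P y) = 0"
    proof (rule ccontr)
      assume "inner x (P y) \<noteq> 0"
      then show False
        using quadratic[of "- (inner x (P x) + 1) / (2 * inner x (P y))"] True by (simp add: field_simps)
    qed
    then show ?thesis
      using True by simp
  next
    case False
    then have pos: "0 < inner y (P y)"
      using P(3)[of y] by simp
    have "0 \<le> inner x (P x) - (inner x (P y))\<^sup>2 / inner y (P y)"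
      using quadratic[of "- inner x (P y) / inner y (P y)"] pos by (simp add: field_simps power2_eq_square)
    then show ?thesis
      using pos by (simp add: field_simps)
  qed
qed

lemma positive_op_form_eq_0:
  assumes "positive_op P" and "inner x (P x) = 0"
  shows "P x = 0"
proof -
  have "(inner x (P (P x)))\<^sup>2 \<le> 0"
    using positive_op_cauchy_schwarz[OF assms(1), of x "P x"] assms(2) by simp
  moreover have "inner x (P (P x)) = inner (P x) (P x)"
    using positive_opD(2)[OF assms(1)] by metis
  ultimately show ?thesis
    by simp
qed

locale coercive_op =
  fixes T :: "'h::{real_inner, complete_space} \<Rightarrow> 'h" and \<rho> :: real
  assumes bl: "bounded_linear T"
    and sym: "inner (T u) v = inner u (T v)"
    and coercive: "\<rho> * (norm u)\<^sup>2 \<le> inner u (T u)"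
    and rho_pos: "0 < \<rho>"
begin

text \<open>With \<open>c \<ge> \<parallel>T\<parallel>\<close> we have \<open>T = c (I - B)\<close> with \<open>0 \<le> B \<le> q I\<close> and \<open>q < 1\<close>, so that
  \<open>sqrt T = sqrt c \<Sum>n. sqrt_coeff n B\<^sup>n\<close>.\<close>
definition c :: real where "c = onorm T + \<rho>"
definition B :: "'h \<Rightarrow> 'h" where "B x = x - (1 / c) *\<^sub>R T x"
definition q :: real where "q = 1 - \<rho> / c"
definition R :: "'h \<Rightarrow> 'h" where "R x = sqrt c *\<^sub>R (\<Sum>n. sqrt_coeff n *\<^sub>R (B ^^ n) x)"

lemma c_pos: "0 < c" and q_nonneg: "0 \<le> q" and q_less_1: "q < 1"
  using onorm_pos_le[OF bl] rho_pos by (auto simp: c_def q_def field_simps)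

lemma inner_T_le: "inner u (T u) \<le> c * (norm u)\<^sup>2"
proof -
  have "inner u (T u) \<le> norm u * (onorm T * norm u)"
    using norm_cauchy_schwarz[of u "T u"] onorm[OF bl, of u] by (meson mult_left_mono norm_ge_zero order_trans)
  also have "\<dots> \<le> c * (norm u)\<^sup>2"
    using rho_pos by (simp add: c_def power2_eq_square algebra_simps)
  finally show ?thesis .
qed

lemma inner_B: "inner u (B u) = (norm u)\<^sup>2 - inner u (T u) / c"
  by (simp add: B_def inner_diff_right power2_norm_eq_inner)

lemma positive_op_B: "positive_op B"
  unfolding positive_op_def
proof (intro conjI allI)
  have "bounded_linear (\<lambda>x. x - (1 / c) *\<^sub>R T x)"
    by (intro bounded_linear_sub bounded_linear_ident bounded_linear_compose[OF bounded_linear_scaleR_right bl])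
  then show "bounded_linear B"
    by (simp add: B_def[abs_def])
  show "inner (B u) v = inner u (B v)" for u v
    by (simp add: B_def inner_diff_left inner_diff_right sym)
  show "0 \<le> inner u (B u)" for u
    using inner_T_le[of u] c_pos by (simp add: inner_B pos_divide_le_eq mult.commute)
qed

lemma inner_B_le: "inner u (B u) \<le> q * (norm u)\<^sup>2"
  using divide_right_mono[OF coercive[of u], of c] c_pos by (simp add: inner_B q_def algebra_simps)

lemma norm_B_le: "norm (B u) \<le> q * norm u"
proof (cases "B u = 0")
  case False
  have "(inner u (B (B u)))\<^sup>2 \<le> inner u (B u) * inner (B u) (B (B u))"
    by (rule positive_op_cauchy_schwarz[OF positive_op_B])
  also have "\<dots> \<le> (q * (norm u)\<^sup>2) * (q * (norm (B u))\<^sup>2)"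
    using inner_B_le positive_opD(3)[OF positive_op_B] q_nonneg by (intro mult_mono) auto
  also have "inner u (B (B u)) = (norm (B u))\<^sup>2"
    using positive_opD(2)[OF positive_op_B, of u "B u"] by (simp add: power2_norm_eq_inner)
  finally have "(norm (B u))\<^sup>2 * (norm (B u))\<^sup>2 \<le> (q * norm u)\<^sup>2 * (norm (B u))\<^sup>2"
    by (simp add: power2_eq_square mult_ac)
  then have "(norm (B u))\<^sup>2 \<le> (q * norm u)\<^sup>2"
    by (rule mult_right_le_imp_le) (use False in simp)
  then show ?thesis
    by (rule power2_le_imp_le) (use q_nonneg in simp)
qed (use q_nonneg in simp)

lemma bounded_linear_B_pow: "bounded_linear (B ^^ n)"
proof (induction n)
  case (Suc n)
  then show ?case
    using bounded_linear_compose[OF positive_opD(1)[OF positive_op_B] Suc] by (simp add: o_def)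
qed (simp add: id_def bounded_linear_ident)

lemma B_pow_sym: "inner ((B ^^ n) u) v = inner u ((B ^^ n) v)"
proof (induction n arbitrary: v)
  case (Suc n)
  have "inner ((B ^^ Suc n) u) v = inner ((B ^^ n) u) (B v)"
    using positive_opD(2)[OF positive_op_B] by simp
  also have "\<dots> = inner u ((B ^^ Suc n) v)"
    by (simp add: Suc funpow_swap1)
  finally show ?case .
qed simp

lemma norm_B_pow_le: "norm ((B ^^ n) u) \<le> q ^ n * norm u"
proof (induction n)
  case (Suc n)
  have "norm ((B ^^ Suc n) u) \<le> q * norm ((B ^^ n) u)"
    using norm_B_le by simp
  also have "\<dots> \<le> q * (q ^ n * norm u)"
    using Suc q_nonneg by (rule mult_left_mono)
  finally show ?case
    by simp
qed simp

lemma norm_series_term_le: "norm (sqrt_coeff n *\<^sub>R (B ^^ n) u) \<le> q ^ n * norm u"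
  using mult_mono[OF abs_sqrt_coeff_le_1 norm_B_pow_le] by simp

lemma summable_series: "summable (\<lambda>n. sqrt_coeff n *\<^sub>R (B ^^ n) u)"
  by (rule summable_comparison_complete[OF norm_series_term_le])
    (use q_nonneg q_less_1 in \<open>intro summable_mult2 summable_geometric, auto\<close>)

lemma norm_series_le: "norm (\<Sum>n. sqrt_coeff n *\<^sub>R (B ^^ n) u) \<le> norm u / (1 - q)"
proof (rule Lim_norm_ubound[OF _ summable_LIMSEQ[OF summable_series]])
  have "norm (\<Sum>k<n. sqrt_coeff k *\<^sub>R (B ^^ k) u) \<le> (\<Sum>k<n. q ^ k) * norm u" for n
  proof -
    have "norm (\<Sum>k<n. sqrt_coeff k *\<^sub>R (B ^^ k) u) \<le> (\<Sum>k<n. norm (sqrt_coeff k *\<^sub>R (B ^^ k) u))"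
      by (rule norm_sum)
    also have "\<dots> \<le> (\<Sum>k<n. q ^ k * norm u)"
      by (intro sum_mono norm_series_term_le)
    finally show ?thesis
      by (simp add: sum_distrib_right)
  qed
  moreover have "(\<Sum>k<n. q ^ k) \<le> 1 / (1 - q)" for n
    using q_nonneg q_less_1 by (simp add: sum_gp_strict divide_right_mono)
  then have "(\<Sum>k<n. q ^ k) * norm u \<le> norm u / (1 - q)" for n
    by (metis mult_right_mono norm_ge_zero times_divide_eq_left mult_1)
  ultimately show "\<forall>\<^sub>F n in sequentially. norm (\<Sum>k<n. sqrt_coeff k *\<^sub>R (B ^^ k) u) \<le> norm u / (1 - q)"
    by (intro always_eventually allI) (rule order_trans)
qed simp

lemma inner_series_left:
  "(\<lambda>n. sqrt_coeff n * inner ((B ^^ n) u) w) sums inner (\<Sum>n. sqrt_coeff n *\<^sub>R (B ^^ n) u) w"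
  using bounded_linear.sums[OF bounded_linear_inner_left summable_sums[OF summable_series]] by simp

lemma bounded_linear_R: "bounded_linear R"
proof (rule bounded_linear_intro)
  note Bn = linear_add[OF bounded_linear.linear[OF bounded_linear_B_pow]]
    linear_scale[OF bounded_linear.linear[OF bounded_linear_B_pow]]
  show "R (x + y) = R x + R y" for x y
    using suminf_add[OF summable_series summable_series, symmetric]
    by (simp add: R_def Bn scaleR_add_right)
  show "R (r *\<^sub>R x) = r *\<^sub>R R x" for r x
    using suminf_scaleR_right[OF summable_series, of r, symmetric]
    by (simp add: R_def Bn mult.commute)
  show "norm (R x) \<le> norm x * (sqrt c / (1 - q))" for x
    using mult_left_mono[OF norm_series_le[of x], of "sqrt c"] c_pos by (simp add: R_def mult_ac)
qed

lemma inner_R_left: "inner (R u) v = sqrt c * (\<Sum>n. sqrt_coeff n * inner ((B ^^ n) u) v)"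
  using inner_series_left by (simp add: R_def sums_iff)

lemma R_sym: "inner (R u) v = inner u (R v)"
proof -
  have "inner ((B ^^ n) v) u = inner ((B ^^ n) u) v" for n
    by (metis B_pow_sym inner_commute)
  then show ?thesis
    using inner_R_left[of u v] inner_R_left[of v u] by (simp add: inner_commute[of u])
qed

text \<open>All coefficients but the first are nonpositive, so the series is bounded below by its
  value at \<open>B = q I\<close>, which is \<open>sqrt (1 - q) \<ge> 0\<close>.\<close>
lemma inner_R_nonneg: "0 \<le> inner u (R u)"
proof -
  have "sqrt_coeff n * q ^ n * (norm u)\<^sup>2 \<le> sqrt_coeff n * inner ((B ^^ n) u) u" for n
  proof (cases "n = 0")
    case False
    have "inner ((B ^^ n) u) u \<le> q ^ n * (norm u)\<^sup>2"
      using norm_cauchy_schwarz[of "(B ^^ n) u" u] mult_right_mono[OF norm_B_pow_le[of n u], of "norm u"]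
      by (simp add: power2_eq_square mult_ac)
    then show ?thesis
      using sqrt_coeff_nonpos[of n] False by (simp add: mult.assoc mult_left_mono_neg)
  qed (simp add: power2_norm_eq_inner)
  then have "sqrt (1 - q) * (norm u)\<^sup>2 \<le> inner (\<Sum>n. sqrt_coeff n *\<^sub>R (B ^^ n) u) u"
    by (rule sums_le[OF _ sums_mult2[OF sums_sqrt_coeff[OF q_nonneg q_less_1]] inner_series_left])
  moreover have "0 \<le> sqrt (1 - q) * (norm u)\<^sup>2"
    using q_less_1 by simp
  ultimately show ?thesis
    using c_pos by (simp add: R_def inner_commute)
qed

lemma positive_op_R: "positive_op R"
  using bounded_linear_R R_sym inner_R_nonneg by (simp add: positive_op_def)

lemma inner_series_series:
  "inner (\<Sum>i. sqrt_coeff i *\<^sub>R (B ^^ i) v) (\<Sum>j. sqrt_coeff j *\<^sub>R (B ^^ j) w)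
    = (\<Sum>i. \<Sum>j. sqrt_coeff i * sqrt_coeff j * inner ((B ^^ (i + j)) v) w)"
proof -
  have "inner ((B ^^ j) w) ((B ^^ i) v) = inner ((B ^^ (i + j)) v) w" for i j
  proof -
    have "(B ^^ (i + j)) v = (B ^^ j) ((B ^^ i) v)"
      by (metis add.commute comp_apply funpow_add)
    then show ?thesis
      by (simp add: B_pow_sym inner_commute[of w])
  qed
  then have "(\<lambda>j. sqrt_coeff j * inner ((B ^^ (i + j)) v) w)
      sums inner ((B ^^ i) v) (\<Sum>j. sqrt_coeff j *\<^sub>R (B ^^ j) w)" for i
    using inner_series_left[of w "(B ^^ i) v"] by (simp add: inner_commute[of "(B ^^ i) v"])
  then have "(\<Sum>i. sqrt_coeff i * inner ((B ^^ i) v) (\<Sum>j. sqrt_coeff j *\<^sub>R (B ^^ j) w))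
      = (\<Sum>i. \<Sum>j. sqrt_coeff i * sqrt_coeff j * inner ((B ^^ (i + j)) v) w)"
    by (simp add: sums_iff suminf_mult mult.assoc)
  then show ?thesis
    using inner_series_left[of v] by (simp add: sums_iff)
qed

text \<open>The Cauchy product of the two series, taken in the weak sense: the convolution of the
  coefficients of \<open>sqrt (1 - x)\<close> with themselves is that of \<open>1 - x\<close>.\<close>
lemma inner_R_R: "inner (R v) (R w) = c * inner (v - B v) w"
proof -
  define \<beta> where "\<beta> k = inner ((B ^^ k) v) w" for k
  define g where "g = (\<lambda>(i, j). sqrt_coeff i * sqrt_coeff j * \<beta> (i + j))"
  have "(\<lambda>k. \<Sum>i\<le>k. g (i, k - i)) sums (\<Sum>i. \<Sum>j. g (i, j))"
  proof (rule sums_antidiagonals, rule norm_summable_on_pairs)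
    show "norm (g (i, j)) \<le> q ^ i * (q ^ j * (norm v * norm w))" for i j
    proof -
      have "norm (g (i, j)) \<le> 1 * 1 * (norm ((B ^^ (i + j)) v) * norm w)"
        unfolding g_def \<beta>_def abs_mult real_norm_def prod.case
        by (intro mult_mono abs_sqrt_coeff_le_1 Cauchy_Schwarz_ineq2) auto
      also have "\<dots> \<le> q ^ (i + j) * norm v * norm w"
        using norm_B_pow_le by (simp add: mult_right_mono)
      finally show ?thesis
        by (simp add: power_add mult_ac)
    qed
  qed (use q_nonneg q_less_1 in \<open>auto intro: summable_mult2 summable_geometric\<close>)
  moreover have "(\<Sum>i\<le>k. g (i, k - i)) = (if k = 0 then \<beta> 0 else if k = 1 then - \<beta> 1 else 0)" for k
    using sqrt_coeff_convolution[of k] by (simp add: g_def sum_distrib_right[symmetric])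
  moreover have "(\<lambda>k. if k = 0 then \<beta> 0 else if k = 1 then - \<beta> 1 else 0) sums (\<beta> 0 - \<beta> 1)"
    using sums_finite[of "{0, 1}" "\<lambda>k. if k = 0 then \<beta> 0 else if k = 1 then - \<beta> 1 else 0"] by simp
  ultimately have "inner (\<Sum>i. sqrt_coeff i *\<^sub>R (B ^^ i) v) (\<Sum>j. sqrt_coeff j *\<^sub>R (B ^^ j) w) = \<beta> 0 - \<beta> 1"
    by (simp add: inner_series_series g_def \<beta>_def sums_iff)
  then show ?thesis
    using c_pos by (simp add: R_def \<beta>_def inner_diff_left)
qed

lemma R_R: "R (R v) = T v"
proof -
  have "inner (R (R v)) w = inner (T v) w" for w
  proof -
    have "inner (R (R v)) w = c * inner (v - B v) w"
      using R_sym inner_R_R by metis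
    also have "\<dots> = inner (c *\<^sub>R (v - B v)) w"
      by simp
    also have "c *\<^sub>R (v - B v) = T v"
      using c_pos by (simp add: B_def)
    finally show ?thesis .
  qed
  then have "inner (R (R v) - T v) (R (R v) - T v) = 0"
    by (simp add: inner_diff_left)
  then show ?thesis
    by simp
qed

lemma positive_sqrt_unique:
  assumes S: "positive_op S" and SS: "S \<circ> S = T"
  shows "S = R"
proof
  interpret S: bounded_linear S
    using positive_opD(1)[OF S] .
  have SS_apply: "S (S x) = T x" for x
    using SS by (metis comp_apply)
  then have "S (T x) = T (S x)" for x
    by metis
  then have "S ((B ^^ n) x) = (B ^^ n) (S x)" for n x
    by (induction n) (simp_all add: B_def S.diff S.scaleR)
  then have SR: "S (R x) = R (S x)" for x
    using S.suminf[OF summable_series] by (simp add: R_def S.scaleR)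
  fix v
  define w where "w = S v - R v"
  have "inner w z = inner v (S z - R z)" for z
    using positive_opD(2)[OF S] positive_opD(2)[OF positive_op_R]
    by (simp add: w_def inner_diff_left inner_diff_right)
  note w_eq = this
  have "S (S w + R w) - R (S w + R w) = 0"
    using linear_add[OF bounded_linear.linear[OF positive_opD(1)[OF positive_op_R]]]
    by (simp add: S.add SR R_R SS_apply)
  then have "inner w (S w) + inner w (R w) = 0"
    using w_eq[of "S w + R w"] by (simp add: inner_add_right)
  then have "S w = 0" "R w = 0"
    using positive_opD(3)[OF S, of w] positive_opD(3)[OF positive_op_R, of w]
    by (auto intro: positive_op_form_eq_0[OF S] positive_op_form_eq_0[OF positive_op_R])
  then have "inner w w = 0"
    using w_eq[of w] by simp
  then show "S v = R v"
    by (simp add: w_def)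
qed

lemma op_sqrt_positive_sqrt: "positive_op (op_sqrt T)" "op_sqrt T \<circ> op_sqrt T = T"
proof -
  have "\<exists>!S. positive_op S \<and> S \<circ> S = T"
  proof (rule ex1I[of _ R])
    show "positive_op R \<and> R \<circ> R = T"
      using positive_op_R by (simp add: fun_eq_iff R_R)
    show "S = R" if "positive_op S \<and> S \<circ> S = T" for S
      using that positive_sqrt_unique by blast
  qed
  then have "positive_op (THE S. positive_op S \<and> S \<circ> S = T) \<and>
      (THE S. positive_op S \<and> S \<circ> S = T) \<circ> (THE S. positive_op S \<and> S \<circ> S = T) = T"
    by (rule theI')
  moreover have "op_sqrt T = (THE S. positive_op S \<and> S \<circ> S = T)"
    by (simp add: op_sqrt_def positive_op_def conj_assoc)
  ultimately have "positive_op (op_sqrt T) \<and> op_sqrt T \<circ> op_sqrt T = T"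
    by simp
  then show "positive_op (op_sqrt T)" "op_sqrt T \<circ> op_sqrt T = T"
    by auto
qed

lemma norm_inv_op_sqrt:
  assumes right_inverse: "\<And>y. T (Ti y) = y"
  shows "(norm (inv (op_sqrt T) y))\<^sup>2 = inner (Ti y) y"
proof -
  let ?S = "op_sqrt T"
  have SS: "?S (?S x) = T x" for x
    using op_sqrt_positive_sqrt(2) by (metis comp_apply)
  have "inj T"
  proof (rule injI)
    fix a b
    assume "T a = T b"
    then have "\<rho> * (norm (a - b))\<^sup>2 \<le> 0"
      using coercive[of "a - b"] by (simp add: linear_diff[OF bounded_linear.linear[OF bl]])
    then show "a = b"
      using rho_pos by (simp add: mult_le_0_iff)
  qed
  then have "inj ?S"
    by (metis SS injI inj_eq)
  define z where "z = inv ?S y"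
  have "?S z = y"
    unfolding z_def by (metis SS right_inverse f_inv_into_f rangeI)
  moreover have "?S (Ti y) = z"
    using \<open>inj ?S\<close> \<open>?S z = y\<close> by (metis SS right_inverse injD)
  ultimately have "(norm z)\<^sup>2 = inner (Ti y) (?S z)"
    using positive_opD(2)[OF op_sqrt_positive_sqrt(1)] by (metis power2_norm_eq_inner)
  then show ?thesis
    using \<open>?S z = y\<close> by (simp add: z_def)
qed

end

section \<open>The Sherman--Morrison recursion\<close>

definition reg_gram :: "real \<Rightarrow> (nat \<Rightarrow> 'h::real_inner) \<Rightarrow> nat \<Rightarrow> 'h \<Rightarrow> 'h" where
  "reg_gram \<rho> xs n y = \<rho> *\<^sub>R y + (\<Sum>i\<in>{1..n}. inner (xs i) y *\<^sub>R xs i)"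

text \<open>The inverse of \<open>A + x x\<^sup>T\<close> is \<open>A\<^sup>-\<^sup>1 - (A\<^sup>-\<^sup>1 x)(A\<^sup>-\<^sup>1 x)\<^sup>T / (1 + x\<^sup>T A\<^sup>-\<^sup>1 x)\<close>.\<close>
fun reg_gram_inv :: "real \<Rightarrow> (nat \<Rightarrow> 'h::real_inner) \<Rightarrow> nat \<Rightarrow> 'h \<Rightarrow> 'h" where
  "reg_gram_inv \<rho> xs 0 y = (1 / \<rho>) *\<^sub>R y"
| "reg_gram_inv \<rho> xs (Suc n) y = reg_gram_inv \<rho> xs n y -
     (inner (reg_gram_inv \<rho> xs n (xs (Suc n))) y / (1 + inner (xs (Suc n)) (reg_gram_inv \<rho> xs n (xs (Suc n)))))
       *\<^sub>R reg_gram_inv \<rho> xs n (xs (Suc n))"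

lemma reg_gram_Suc: "reg_gram \<rho> xs (Suc n) y = reg_gram \<rho> xs n y + inner (xs (Suc n)) y *\<^sub>R xs (Suc n)"
  by (simp add: reg_gram_def algebra_simps)

lemma inner_reg_gram: "inner u (reg_gram \<rho> xs n u) = \<rho> * (norm u)\<^sup>2 + (\<Sum>i\<in>{1..n}. (inner (xs i) u)\<^sup>2)"
  by (simp add: reg_gram_def inner_add_right inner_sum_right inner_commute dot_square_norm power2_eq_square)

lemma bounded_linear_reg_gram: "bounded_linear (reg_gram \<rho> xs n)"
proof -
  have "bounded_linear (\<lambda>y. \<rho> *\<^sub>R y + (\<Sum>i\<in>{1..n}. inner (xs i) y *\<^sub>R xs i))"
    by (intro bounded_linear_add bounded_linear_scaleR_right bounded_linear_sum
        bounded_linear_scaleR_const bounded_linear_inner_right)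
  then show ?thesis
    by (simp add: reg_gram_def[abs_def])
qed

lemma coercive_op_reg_gram:
  fixes xs :: "nat \<Rightarrow> 'h::{real_inner, complete_space}"
  assumes "0 < \<rho>"
  shows "coercive_op (reg_gram \<rho> xs n) \<rho>"
proof (rule coercive_op.intro)
  show "bounded_linear (reg_gram \<rho> xs n)"
    by (rule bounded_linear_reg_gram)
  show "inner (reg_gram \<rho> xs n u) v = inner u (reg_gram \<rho> xs n v)" for u v
    by (simp add: reg_gram_def inner_add_left inner_add_right inner_sum_left inner_sum_right mult.commute inner_commute)
  show "\<rho> * (norm u)\<^sup>2 \<le> inner u (reg_gram \<rho> xs n u)" for u
    by (simp add: inner_reg_gram sum_nonneg)
qed (rule assms)

lemma reg_gram_inv_sym: "inner (reg_gram_inv \<rho> xs n y) z = inner y (reg_gram_inv \<rho> xs n z)"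
proof (induction n arbitrary: y z)
  case (Suc n)
  let ?w = "reg_gram_inv \<rho> xs n (xs (Suc n))"
  let ?d = "1 + inner (xs (Suc n)) ?w"
  have "inner (reg_gram_inv \<rho> xs (Suc n) y) z = inner (reg_gram_inv \<rho> xs n y) z - inner ?w y / ?d * inner ?w z"
    by (simp only: reg_gram_inv.simps inner_diff_left inner_scaleR_left)
  also have "\<dots> = inner y (reg_gram_inv \<rho> xs n z) - inner ?w z / ?d * inner y ?w"
    by (simp add: Suc inner_commute[of y])
  also have "\<dots> = inner y (reg_gram_inv \<rho> xs (Suc n) z)"
    by (simp only: reg_gram_inv.simps inner_diff_right inner_scaleR_right)
  finally show ?case .
qed (simp add: inner_commute)

lemma reg_gram_reg_gram_inv:
  assumes "0 < \<rho>"
  shows "reg_gram \<rho> xs n (reg_gram_inv \<rho> xs n y) = y"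
proof (induction n arbitrary: y)
  case 0
  show ?case
    using assms by (simp add: reg_gram_def)
next
  case (Suc n)
  let ?x = "xs (Suc n)"
  let ?w = "reg_gram_inv \<rho> xs n ?x"
  let ?A = "reg_gram \<rho> xs n"
  interpret A: bounded_linear ?A
    by (rule bounded_linear_reg_gram)
  have "0 \<le> inner ?w (?A ?w)"
    using inner_reg_gram[of ?w] assms by (simp add: sum_nonneg)
  then have pos: "0 < 1 + inner ?x ?w"
    using Suc[of ?x] by (simp add: inner_commute)
  define \<alpha> where "\<alpha> = inner ?w y / (1 + inner ?x ?w)"
  have "inner ?x (reg_gram_inv \<rho> xs n y) = inner ?w y"
    using reg_gram_inv_sym by (metis inner_commute)
  then have "reg_gram \<rho> xs (Suc n) (reg_gram_inv \<rho> xs (Suc n) y)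
      = y + (inner ?w y - \<alpha> * (1 + inner ?x ?w)) *\<^sub>R ?x"
    by (simp add: \<alpha>_def[symmetric] reg_gram_Suc A.diff A.scaleR Suc inner_diff_right algebra_simps)
  also have "inner ?w y - \<alpha> * (1 + inner ?x ?w) = 0"
    using pos by (simp add: \<alpha>_def)
  finally show ?case
    by simp
qed

lemma positive_op_reg_gram_inv:
  assumes "0 < \<rho>"
  shows "positive_op (reg_gram_inv \<rho> xs n)"
  unfolding positive_op_def
proof (intro conjI allI)
  show "bounded_linear (reg_gram_inv \<rho> xs n)"
  proof (induction n)
    case (Suc n)
    let ?w = "reg_gram_inv \<rho> xs n (xs (Suc n))"
    let ?d = "1 + inner (xs (Suc n)) ?w"
    have "bounded_linear (\<lambda>y. reg_gram_inv \<rho> xs n y - inner ((1 / ?d) *\<^sub>R ?w) y *\<^sub>R ?w)"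
      using Suc by (intro bounded_linear_sub bounded_linear_scaleR_const bounded_linear_inner_right)
    then show ?case
      by (simp add: fun_eq_iff divide_inverse mult.commute)
  qed (simp add: bounded_linear_scaleR_right)
  show "inner (reg_gram_inv \<rho> xs n u) v = inner u (reg_gram_inv \<rho> xs n v)" for u v
    by (rule reg_gram_inv_sym)
  show "0 \<le> inner y (reg_gram_inv \<rho> xs n y)" for y
  proof -
    let ?u = "reg_gram_inv \<rho> xs n y"
    have "inner y ?u = inner ?u (reg_gram \<rho> xs n ?u)"
      by (simp add: reg_gram_reg_gram_inv[OF assms] inner_commute)
    also have "\<dots> = \<rho> * (norm ?u)\<^sup>2 + (\<Sum>i\<in>{1..n}. (inner (xs i) ?u)\<^sup>2)"
      by (rule inner_reg_gram)
    finally show ?thesis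
      using assms by (simp add: sum_nonneg)
  qed
qed

lemma inner_reg_gram_inv_Suc_le:
  assumes "0 < \<rho>"
  shows "inner (reg_gram_inv \<rho> xs (Suc n) y) y \<le> inner (reg_gram_inv \<rho> xs n y) y"
proof -
  let ?w = "reg_gram_inv \<rho> xs n (xs (Suc n))"
  have "0 < 1 + inner (xs (Suc n)) ?w"
    using positive_opD(3)[OF positive_op_reg_gram_inv[OF assms, of xs n], of "xs (Suc n)"] by linarith
  then show ?thesis
    by (simp add: inner_diff_left inner_commute[of y])
qed

lemma inner_reg_gram_inv_Suc_last_le_1:
  assumes "0 < \<rho>"
  shows "inner (reg_gram_inv \<rho> xs (Suc n) (xs (Suc n))) (xs (Suc n)) \<le> 1"
proof -
  define a where "a = inner (xs (Suc n)) (reg_gram_inv \<rho> xs n (xs (Suc n)))"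
  have "0 \<le> a"
    unfolding a_def by (rule positive_opD(3)[OF positive_op_reg_gram_inv[OF assms]])
  have "inner (reg_gram_inv \<rho> xs n (xs (Suc n))) (xs (Suc n)) = a"
    by (simp add: a_def inner_commute)
  then have "inner (reg_gram_inv \<rho> xs (Suc n) (xs (Suc n))) (xs (Suc n)) = a - a / (1 + a) * a"
    by (simp only: reg_gram_inv.simps inner_diff_left inner_scaleR_left flip: a_def)
  also have "\<dots> = a / (1 + a)"
    using \<open>0 \<le> a\<close> by (simp add: field_simps)
  also have "\<dots> \<le> 1"
    using \<open>0 \<le> a\<close> by simp
  finally show ?thesis .
qed

lemma norm_inv_sqrt_op_Vop:
  fixes X :: "nat \<Rightarrow> 'a \<Rightarrow> 'h::{real_inner, complete_space}"
  assumes "0 < \<rho>"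
  shows "(norm (inv_sqrt_op \<rho> (Vop X t \<omega>) y))\<^sup>2 = inner (reg_gram_inv \<rho> (\<lambda>i. X i \<omega>) t y) y"
proof -
  have "(\<lambda>v. \<rho> *\<^sub>R v + Vop X t \<omega> v) = reg_gram \<rho> (\<lambda>i. X i \<omega>) t"
    by (simp add: fun_eq_iff Vop_def outer_op_def reg_gram_def)
  then show ?thesis
    unfolding inv_sqrt_op_def
    using coercive_op.norm_inv_op_sqrt[OF coercive_op_reg_gram[OF assms] reg_gram_reg_gram_inv[OF assms]]
    by simp
qed

section \<open>The one-step inequality\<close>

text \<open>With \<open>a = lam r\<close>, \<open>\<tau> = lam \<bar>e\<bar> sqrt g\<close> and \<open>\<alpha> = lam e p / r\<close> (so \<open>\<bar>\<alpha>\<bar> \<le> \<tau>\<close>) this is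
  \<open>cosh_sqrt_quadratic_le\<close>, after which \<open>exp_minus_linear_scale_le\<close> pulls the factor \<open>g \<le> 1\<close>
  out of \<open>exp \<tau> - \<tau> - 1\<close>.\<close>
lemma cosh_sqrt_quadratic_form_le:
  fixes r p g e lam :: real
  assumes r: "0 \<le> r" and g: "0 \<le> g" "g \<le> 1" and cs: "p\<^sup>2 \<le> g * r\<^sup>2" and lam: "0 \<le> lam"
  shows "cosh (lam * sqrt (r\<^sup>2 + 2 * e * p + e\<^sup>2 * g))
    \<le> cosh (lam * r) * (1 + g * (exp (lam * \<bar>e\<bar>) - lam * \<bar>e\<bar> - 1))
      + e * (if r = 0 then 0 else lam * p / r * sinh (lam * r))"
proof -
  define a where "a = lam * r"
  define \<alpha> where "\<alpha> = (if r = 0 then 0 else lam * e * p / r)"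
  define \<tau> where "\<tau> = lam * \<bar>e\<bar> * sqrt g"
  have "\<bar>p\<bar> \<le> sqrt g * r"
    using real_sqrt_le_mono[OF cs] r g by (simp add: real_sqrt_mult)
  then have "lam * \<bar>e\<bar> * \<bar>p\<bar> \<le> lam * \<bar>e\<bar> * (sqrt g * r)"
    using lam by (intro mult_left_mono) auto
  then have "\<bar>\<alpha>\<bar> \<le> \<tau>"
    using lam r g by (auto simp: \<alpha>_def \<tau>_def abs_mult divide_le_eq mult_ac)
  moreover have "0 \<le> a"
    using lam r by (simp add: a_def)
  ultimately have main: "cosh (sqrt (a\<^sup>2 + 2 * a * \<alpha> + \<tau>\<^sup>2)) \<le> cosh a + \<alpha> * sinh a + cosh a * (exp \<tau> - \<tau> - 1)"
    by (intro cosh_sqrt_quadratic_le)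
  have "a\<^sup>2 + 2 * a * \<alpha> + \<tau>\<^sup>2 = lam\<^sup>2 * (r\<^sup>2 + 2 * e * p + e\<^sup>2 * g)"
  proof (cases "r = 0")
    case True
    then have "p = 0"
      using cs by simp
    with True show ?thesis
      using g by (simp add: a_def \<alpha>_def \<tau>_def power_mult_distrib)
  qed (use g in \<open>simp add: a_def \<alpha>_def \<tau>_def power_mult_distrib power2_eq_square field_simps\<close>)
  then have "cosh (lam * sqrt (r\<^sup>2 + 2 * e * p + e\<^sup>2 * g)) = cosh (sqrt (a\<^sup>2 + 2 * a * \<alpha> + \<tau>\<^sup>2))"
    using lam by (simp only: real_sqrt_mult real_sqrt_abs abs_of_nonneg)
  also have "\<dots> \<le> cosh a + \<alpha> * sinh a + cosh a * (exp \<tau> - \<tau> - 1)"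
    by (rule main)
  also have "\<dots> \<le> cosh (lam * r) * (1 + g * (exp (lam * \<bar>e\<bar>) - lam * \<bar>e\<bar> - 1))
      + e * (if r = 0 then 0 else lam * p / r * sinh (lam * r))"
  proof -
    have "exp \<tau> - \<tau> - 1 \<le> g * (exp (lam * \<bar>e\<bar>) - lam * \<bar>e\<bar> - 1)"
      using exp_minus_linear_scale_le[of "sqrt g" "lam * \<bar>e\<bar>"] g lam by (simp add: \<tau>_def mult_ac)
    then have "cosh a * (exp \<tau> - \<tau> - 1) \<le> cosh a * (g * (exp (lam * \<bar>e\<bar>) - lam * \<bar>e\<bar> - 1))"
      by (rule mult_left_mono) simp
    moreover have "\<alpha> * sinh a = e * (if r = 0 then 0 else lam * p / r * sinh (lam * r))"
      by (simp add: \<alpha>_def a_def)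
    moreover have "cosh a * (1 + g * (exp (lam * \<bar>e\<bar>) - lam * \<bar>e\<bar> - 1))
        = cosh a + cosh a * (g * (exp (lam * \<bar>e\<bar>) - lam * \<bar>e\<bar> - 1))"
      by (simp add: algebra_simps)
    ultimately show ?thesis
      unfolding a_def by linarith
  qed
  finally show ?thesis .
qed

definition cosh_drift :: "('h::real_inner \<Rightarrow> 'h) \<Rightarrow> real \<Rightarrow> 'h \<Rightarrow> 'h \<Rightarrow> real" where
  "cosh_drift P lam x u =
     (let r = sqrt (inner (P u) u) in if r = 0 then 0 else lam * inner (P x) u / r * sinh (lam * r))"

lemma cosh_sqrt_form_add_le:
  assumes P: "positive_op P" and x: "inner (P x) x \<le> 1" and lam: "0 \<le> lam"
  shows "cosh (lam * sqrt (inner (P (u + e *\<^sub>R x)) (u + e *\<^sub>R x)))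
    \<le> cosh (lam * sqrt (inner (P u) u)) * (1 + inner (P x) x * (exp (lam * \<bar>e\<bar>) - lam * \<bar>e\<bar> - 1))
      + e * cosh_drift P lam x u"
proof -
  interpret P: bounded_linear P
    by (rule positive_opD(1)[OF P])
  define r where "r = sqrt (inner (P u) u)"
  define p where "p = inner (P x) u"
  have r: "0 \<le> r" "r\<^sup>2 = inner (P u) u"
    using positive_opD(3)[OF P, of u] by (simp_all add: r_def inner_commute)
  have g: "0 \<le> inner (P x) x" "inner (P x) x \<le> 1"
    using positive_opD(3)[OF P, of x] x by (simp_all add: inner_commute)
  have cs: "p\<^sup>2 \<le> inner (P x) x * r\<^sup>2"
    using positive_op_cauchy_schwarz[OF P, of x u] positive_opD(2)[OF P]
    by (simp add: p_def r inner_commute)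
  have "inner (P u) x = p"
    using positive_opD(2)[OF P, of x u] by (simp add: p_def inner_commute)
  then have form: "inner (P (u + e *\<^sub>R x)) (u + e *\<^sub>R x) = r\<^sup>2 + 2 * e * p + e\<^sup>2 * inner (P x) x"
    unfolding r(2) by (simp add: P.add P.scaleR inner_add_left inner_add_right p_def power2_eq_square algebra_simps)
  show ?thesis
    unfolding form cosh_drift_def Let_def r_def[symmetric] p_def[symmetric]
    by (rule cosh_sqrt_quadratic_form_le[OF r(1) g cs lam])
qed

section \<open>Conditional expectations\<close>

lemma ennreal_add_mult_split:
  fixes z h e :: real
  assumes "0 \<le> z" and "0 \<le> z + h * e"
  shows "ennreal (z + h * e) + (ennreal h * ennreal (- e) + ennreal (- h) * ennreal e)
       = ennreal z + (ennreal h * ennreal e + ennreal (- h) * ennreal (- e))"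
  using assms
  by (cases "0 \<le> h"; cases "0 \<le> e")
    (auto simp: ennreal_neg ennreal_mult[symmetric] ennreal_plus[symmetric] mult_nonneg_nonpos
      mult_nonpos_nonneg mult_nonpos_nonpos simp del: ennreal_plus)

context sigma_finite_subalgebra
begin

lemma nn_cond_exp_finite_AE:
  assumes [measurable]: "f \<in> borel_measurable M" and "(\<integral>\<^sup>+x. f x \<partial>M) \<noteq> \<infinity>"
  shows "AE x in M. nn_cond_exp M F f x \<noteq> \<infinity>"
proof (rule nn_integral_PInf_AE)
  have "(\<integral>\<^sup>+x. 1 * nn_cond_exp M F f x \<partial>M) = (\<integral>\<^sup>+x. 1 * f x \<partial>M)"
    by (rule nn_cond_exp_intg) auto
  then show "integral\<^sup>N M (nn_cond_exp M F f) \<noteq> \<infinity>"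
    using assms(2) by simp
qed simp

lemma nn_cond_exp_pos_neg_part_AE:
  assumes "integrable M e" and "AE x in M. real_cond_exp M F e x = 0"
  shows "AE x in M. nn_cond_exp M F (\<lambda>x. ennreal (e x)) x = nn_cond_exp M F (\<lambda>x. ennreal (- e x)) x
           \<and> nn_cond_exp M F (\<lambda>x. ennreal (e x)) x \<noteq> \<infinity>"
proof -
  have [measurable]: "e \<in> borel_measurable M"
    using assms(1) by auto
  have fin: "(\<integral>\<^sup>+x. ennreal (s * e x) \<partial>M) \<noteq> \<infinity>" if "\<bar>s\<bar> = 1" for s
  proof -
    have "s * y \<le> norm y" for y :: real
      using that abs_ge_self[of "s * y"] by (simp add: abs_mult)
    then have "(\<integral>\<^sup>+x. ennreal (s * e x) \<partial>M) \<le> (\<integral>\<^sup>+x. ennreal (norm (e x)) \<partial>M)"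
      by (intro nn_integral_mono ennreal_leI)
    moreover have "(\<integral>\<^sup>+x. ennreal (norm (e x)) \<partial>M) \<noteq> \<infinity>"
      using assms(1) by (simp add: integrable_iff_bounded)
    ultimately show ?thesis
      by (metis infinity_ennreal_def neq_top_trans)
  qed
  have "AE x in M. nn_cond_exp M F (\<lambda>x. ennreal (e x)) x \<noteq> \<infinity>"
    by (rule nn_cond_exp_finite_AE) (use fin[of 1] in auto)
  moreover have "AE x in M. nn_cond_exp M F (\<lambda>x. ennreal (- e x)) x \<noteq> \<infinity>"
    by (rule nn_cond_exp_finite_AE) (use fin[of "-1"] in auto)
  ultimately show ?thesis
    using assms(2)
  proof eventually_elim
    case (elim x)
    then have "ennreal (enn2real (nn_cond_exp M F (\<lambda>x. ennreal (e x)) x))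
        = ennreal (enn2real (nn_cond_exp M F (\<lambda>x. ennreal (- e x)) x))"
      by (simp add: real_cond_exp_def)
    with elim(1,2) show ?case
      by (simp add: ennreal_enn2real_if)
  qed
qed

text \<open>No integrability of \<open>h e\<close> is needed: splitting \<open>h\<close> and \<open>e\<close> into positive and negative
  parts keeps every term nonnegative.\<close>
lemma nn_cond_exp_add_martingale_increment:
  fixes Z h e :: "'a \<Rightarrow> real"
  assumes [measurable]: "Z \<in> borel_measurable M" "h \<in> borel_measurable F"
    and e: "integrable M e" "AE x in M. real_cond_exp M F e x = 0"
    and "\<And>x. 0 \<le> Z x" "\<And>x. 0 \<le> Z x + h x * e x"
  shows "AE x in M. nn_cond_exp M F (\<lambda>x. ennreal (Z x + h x * e x)) x = nn_cond_exp M F (\<lambda>x. ennreal (Z x)) x"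
proof -
  have [measurable]: "e \<in> borel_measurable M"
    using e(1) by auto
  have [measurable]: "h \<in> borel_measurable M"
    using measurable_from_subalg[OF subalg] assms(2) by blast
  let ?N = "nn_cond_exp M F"
  define ep where "ep x = ennreal (e x)" for x
  define en where "en x = ennreal (- e x)" for x
  define hp where "hp x = ennreal (h x)" for x
  define hn where "hn x = ennreal (- h x)" for x
  have [measurable]: "ep \<in> borel_measurable M" "en \<in> borel_measurable M"
    "hp \<in> borel_measurable F" "hn \<in> borel_measurable F" "hp \<in> borel_measurable M" "hn \<in> borel_measurable M"
    unfolding ep_def en_def hp_def hn_def by measurable
  define A where "A x = hp x * ep x + hn x * en x" for x
  define B where "B x = hp x * en x + hn x * ep x" for x
  have split: "(\<lambda>x. ennreal (Z x + h x * e x) + B x) = (\<lambda>x. ennreal (Z x) + A x)"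
    using ennreal_add_mult_split assms(5,6) by (auto simp: A_def B_def ep_def en_def hp_def hn_def)
  have "AE x in M. ?N (\<lambda>x. ennreal (Z x + h x * e x)) x + ?N B x = ?N (\<lambda>x. ennreal (Z x + h x * e x) + B x) x"
       "AE x in M. ?N (\<lambda>x. ennreal (Z x)) x + ?N A x = ?N (\<lambda>x. ennreal (Z x) + A x) x"
       "AE x in M. ?N (\<lambda>x. hp x * ep x) x + ?N (\<lambda>x. hn x * en x) x = ?N A x"
       "AE x in M. ?N (\<lambda>x. hp x * en x) x + ?N (\<lambda>x. hn x * ep x) x = ?N B x"
    unfolding A_def B_def by (intro nn_cond_exp_sum; measurable)+
  moreover have "AE x in M. hp x * ?N ep x = ?N (\<lambda>x. hp x * ep x) x"
                "AE x in M. hn x * ?N en x = ?N (\<lambda>x. hn x * en x) x"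
                "AE x in M. hp x * ?N en x = ?N (\<lambda>x. hp x * en x) x"
                "AE x in M. hn x * ?N ep x = ?N (\<lambda>x. hn x * ep x) x"
    by (intro nn_cond_exp_prod; measurable)+
  moreover have "AE x in M. ?N ep x = ?N en x \<and> ?N ep x \<noteq> \<infinity>"
    unfolding ep_def en_def by (rule nn_cond_exp_pos_neg_part_AE[OF e])
  ultimately show ?thesis
  proof eventually_elim
    case (elim x)
    then have "?N A x = ?N B x" and "?N B x \<noteq> \<infinity>"
      by (auto simp: hp_def hn_def ennreal_mult_eq_top_iff)
    with elim(1,2) show ?case
      unfolding split by (metis ennreal_add_left_cancel add.commute)
  qed
qed

end

section \<open>The supermartingale\<close>

lemma measurable_reg_gram_inv:
  fixes X :: "nat \<Rightarrow> 'a \<Rightarrow> 'h::{real_inner, second_countable_topology}"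
  assumes "\<And>i. 1 \<le> i \<Longrightarrow> i \<le> n \<Longrightarrow> X i \<in> borel_measurable N" and "v \<in> borel_measurable N"
  shows "(\<lambda>\<omega>. reg_gram_inv \<rho> (\<lambda>i. X i \<omega>) n (v \<omega>)) \<in> borel_measurable N"
  using assms
proof (induction n arbitrary: v)
  case (Suc n)
  have [measurable]: "X (Suc n) \<in> borel_measurable N" "v \<in> borel_measurable N"
    "(\<lambda>\<omega>. reg_gram_inv \<rho> (\<lambda>i. X i \<omega>) n (v \<omega>)) \<in> borel_measurable N"
    "(\<lambda>\<omega>. reg_gram_inv \<rho> (\<lambda>i. X i \<omega>) n (X (Suc n) \<omega>)) \<in> borel_measurable N"
    using Suc by auto
  show ?case
    by simp measurable
qed simp

lemma borel_measurable_cosh_sinh [measurable]: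
  "(cosh :: real \<Rightarrow> real) \<in> borel_measurable borel" "(sinh :: real \<Rightarrow> real) \<in> borel_measurable borel"
  by (intro borel_measurable_continuous_onI continuous_intros)+

locale self_normalized_setting =
  fixes M :: "'a measure" and F :: "nat \<Rightarrow> 'a measure"
    and X :: "nat \<Rightarrow> 'a \<Rightarrow> 'h::{real_inner, complete_space, second_countable_topology}"
    and \<epsilon> :: "nat \<Rightarrow> 'a \<Rightarrow> real" and \<rho> lam :: real
  assumes prob_space: "prob_space M"
    and filtration: "is_filtration M F"
    and X_meas: "\<And>t. t \<ge> 1 \<Longrightarrow> X t \<in> borel_measurable (F (t - 1))"
    and \<epsilon>_meas: "\<And>t. t \<ge> 1 \<Longrightarrow> \<epsilon> t \<in> borel_measurable (F t)"
    and \<epsilon>_integrable: "\<And>t. t \<ge> 1 \<Longrightarrow> integrable M (\<epsilon> t)"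
    and \<epsilon>_cond_exp: "\<And>t. t \<ge> 1 \<Longrightarrow> AE \<omega> in M. real_cond_exp M (F (t - 1)) (\<epsilon> t) \<omega> = 0"
    and rho_pos: "0 < \<rho>" and lam_pos: "0 < lam"
begin

lemma subalgebra_F: "subalgebra M (F t)"
  using filtration by (simp add: is_filtration_def)

lemma sigma_finite_subalgebra_F: "sigma_finite_subalgebra M (F t)"
  using prob_space subalgebra_F[of t]
  by (intro finite_measure_subalgebra_is_sigma_finite)
    (simp add: finite_measure_subalgebra_def finite_measure_subalgebra_axioms_def prob_space_def)

lemma measurable_F_mono: "s \<le> t \<Longrightarrow> f \<in> borel_measurable (F s) \<Longrightarrow> f \<in> borel_measurable (F t)"
  using filtration subalgebra_F[of s] subalgebra_F[of t]
  by (intro measurable_from_subalg[of "F t" "F s"]) (auto simp: is_filtration_def subalgebra_def)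

lemma measurable_F_M: "f \<in> borel_measurable (F t) \<Longrightarrow> f \<in> borel_measurable M"
  using measurable_from_subalg[OF subalgebra_F] by blast

lemma X_meas_le: "1 \<le> i \<Longrightarrow> i \<le> Suc k \<Longrightarrow> X i \<in> borel_measurable (F k)"
  by (rule measurable_F_mono[OF _ X_meas]) auto

text \<open>In the notation of the statement, \<open>wnorm2 t \<omega> y = \<parallel>(\<rho> I + V\<^sub>t)\<^sup>-\<^sup>1\<^sup>/\<^sup>2 y\<parallel>\<^sup>2\<close> and
  \<open>leverage t = \<parallel>G\<^sub>t\<parallel>\<^sup>2\<close>.\<close>
definition wnorm2 :: "nat \<Rightarrow> 'a \<Rightarrow> 'h \<Rightarrow> real" where "wnorm2 t \<omega> y = inner (reg_gram_inv \<rho> (\<lambda>i. X i \<omega>) t y) y"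
definition cosh_term :: "nat \<Rightarrow> 'a \<Rightarrow> real" where "cosh_term t \<omega> = cosh (lam * sqrt (wnorm2 t \<omega> (Mvec X \<epsilon> t \<omega>)))"
definition leverage :: "nat \<Rightarrow> 'a \<Rightarrow> real" where "leverage t \<omega> = wnorm2 t \<omega> (X t \<omega>)"
definition psi :: "nat \<Rightarrow> 'a \<Rightarrow> real" where "psi t \<omega> = exp (lam * \<bar>\<epsilon> t \<omega>\<bar>) - lam * \<bar>\<epsilon> t \<omega>\<bar> - 1"
definition compensator :: "nat \<Rightarrow> 'a \<Rightarrow> ennreal" where "compensator t \<omega> = (\<Sum>i\<in>{1..t}. e_term M F \<rho> X \<epsilon> lam i \<omega>)"
definition discount :: "nat \<Rightarrow> 'a \<Rightarrow> real" where
  "discount t \<omega> = (if compensator t \<omega> = \<infinity> then 0 else exp (- enn2real (compensator t \<omega>)))"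
definition drift :: "nat \<Rightarrow> 'a \<Rightarrow> real" where
  "drift n \<omega> = cosh_drift (reg_gram_inv \<rho> (\<lambda>i. X i \<omega>) (Suc n)) lam (X (Suc n) \<omega>) (Mvec X \<epsilon> n \<omega>)"

lemma S_proc_eq: "S_proc M F \<rho> X \<epsilon> lam t \<omega> = cosh_term t \<omega> * discount t \<omega>"
  by (simp add: S_proc_def cosh_term_def discount_def compensator_def wnorm2_def
      norm_inv_sqrt_op_Vop[OF rho_pos, symmetric])

lemma e_term_eq:
  "e_term M F \<rho> X \<epsilon> lam t \<omega> = ennreal (leverage t \<omega>) * nn_cond_exp M (F (t - 1)) (\<lambda>y. ennreal (psi t y)) \<omega>"
  by (simp add: e_term_def Gvec_def leverage_def wnorm2_def psi_def norm_inv_sqrt_op_Vop[OF rho_pos])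

lemma leverage_nonneg: "0 \<le> leverage t \<omega>"
  using positive_opD(3)[OF positive_op_reg_gram_inv[OF rho_pos]] by (simp add: leverage_def wnorm2_def inner_commute)

lemma psi_nonneg: "0 \<le> psi t \<omega>"
  using exp_ge_add_one_self[of "lam * \<bar>\<epsilon> t \<omega>\<bar>"] unfolding psi_def by linarith

lemma discount_nonneg: "0 \<le> discount t \<omega>"
  by (simp add: discount_def)

lemma S_proc_nonneg: "0 \<le> S_proc M F \<rho> X \<epsilon> lam t \<omega>"
  by (simp add: S_proc_eq cosh_term_def discount_nonneg)

lemma Mvec_meas: "Mvec X \<epsilon> t \<in> borel_measurable (F t)"
proof -
  have [measurable]: "\<epsilon> i \<in> borel_measurable (F t)" "X i \<in> borel_measurable (F t)" if "i \<in> {1..t}" for i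
    using that by (auto intro: measurable_F_mono[OF _ \<epsilon>_meas] X_meas_le)
  show ?thesis
    unfolding Mvec_def[abs_def] by measurable
qed

lemma wnorm2_meas:
  assumes "t \<le> Suc k" and "v \<in> borel_measurable (F k)"
  shows "(\<lambda>\<omega>. wnorm2 t \<omega> (v \<omega>)) \<in> borel_measurable (F k)"
proof -
  have [measurable]: "v \<in> borel_measurable (F k)"
      "(\<lambda>\<omega>. reg_gram_inv \<rho> (\<lambda>i. X i \<omega>) t (v \<omega>)) \<in> borel_measurable (F k)"
    using assms by (auto intro!: measurable_reg_gram_inv X_meas_le)
  show ?thesis
    unfolding wnorm2_def by measurable
qed

lemma cosh_term_meas: "cosh_term t \<in> borel_measurable (F t)"
proof -
  have [measurable]: "(\<lambda>\<omega>. wnorm2 t \<omega> (Mvec X \<epsilon> t \<omega>)) \<in> borel_measurable (F t)"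
    by (intro wnorm2_meas Mvec_meas) simp
  show ?thesis
    unfolding cosh_term_def[abs_def] by measurable
qed

lemma leverage_meas: "leverage (Suc n) \<in> borel_measurable (F n)"
  unfolding leverage_def[abs_def] by (intro wnorm2_meas X_meas_le) auto

lemma compensator_meas: "t \<le> Suc k \<Longrightarrow> compensator t \<in> borel_measurable (F k)"
proof -
  assume "t \<le> Suc k"
  have "e_term M F \<rho> X \<epsilon> lam (Suc n) \<in> borel_measurable (F n)" for n
  proof -
    have [measurable]: "leverage (Suc n) \<in> borel_measurable (F n)"
      by (rule leverage_meas)
    show ?thesis
      unfolding e_term_eq[abs_def] by simp measurable
  qed
  note e_term_meas = this
  have "e_term M F \<rho> X \<epsilon> lam i \<in> borel_measurable (F k)" if "i \<in> {1..t}" for i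
  proof (rule measurable_F_mono)
    show "i - 1 \<le> k"
      using that \<open>t \<le> Suc k\<close> by auto
    show "e_term M F \<rho> X \<epsilon> lam i \<in> borel_measurable (F (i - 1))"
      using that e_term_meas[of "i - 1"] by simp
  qed
  then show ?thesis
    unfolding compensator_def[abs_def] by (rule borel_measurable_sum)
qed

lemma discount_meas: "t \<le> Suc k \<Longrightarrow> discount t \<in> borel_measurable (F k)"
proof -
  assume "t \<le> Suc k"
  then have [measurable]: "compensator t \<in> borel_measurable (F k)"
    by (rule compensator_meas)
  show ?thesis
    unfolding discount_def[abs_def] by measurable
qed

lemma S_proc_meas: "S_proc M F \<rho> X \<epsilon> lam t \<in> borel_measurable (F t)"
proof -
  have [measurable]: "cosh_term t \<in> borel_measurable (F t)" "discount t \<in> borel_measurable (F t)"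
    by (auto intro: cosh_term_meas discount_meas)
  show ?thesis
    unfolding S_proc_eq[abs_def] by measurable
qed

lemma drift_meas: "drift n \<in> borel_measurable (F n)"
proof -
  have [measurable]: "Mvec X \<epsilon> n \<in> borel_measurable (F n)" "X (Suc n) \<in> borel_measurable (F n)"
    by (auto intro: Mvec_meas X_meas_le)
  have [measurable]:
      "(\<lambda>\<omega>. reg_gram_inv \<rho> (\<lambda>i. X i \<omega>) (Suc n) (Mvec X \<epsilon> n \<omega>)) \<in> borel_measurable (F n)"
      "(\<lambda>\<omega>. reg_gram_inv \<rho> (\<lambda>i. X i \<omega>) (Suc n) (X (Suc n) \<omega>)) \<in> borel_measurable (F n)"
    by (rule measurable_reg_gram_inv; auto intro: X_meas_le Mvec_meas)+
  show ?thesis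
    unfolding drift_def[abs_def] cosh_drift_def Let_def by measurable
qed

lemma cosh_term_Suc_le:
  "cosh_term (Suc n) \<omega> \<le> cosh_term n \<omega> * (1 + leverage (Suc n) \<omega> * psi (Suc n) \<omega>) + \<epsilon> (Suc n) \<omega> * drift n \<omega>"
proof -
  let ?I = "reg_gram_inv \<rho> (\<lambda>i. X i \<omega>)" and ?u = "Mvec X \<epsilon> n \<omega>"
  let ?A = "cosh (lam * sqrt (inner (?I (Suc n) ?u) ?u))"
  have "Mvec X \<epsilon> (Suc n) \<omega> = ?u + \<epsilon> (Suc n) \<omega> *\<^sub>R X (Suc n) \<omega>"
    by (simp add: Mvec_def)
  then have step: "cosh_term (Suc n) \<omega> \<le> ?A * (1 + leverage (Suc n) \<omega> * psi (Suc n) \<omega>) + \<epsilon> (Suc n) \<omega> * drift n \<omega>"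
    unfolding cosh_term_def wnorm2_def leverage_def psi_def drift_def
    using cosh_sqrt_form_add_le[OF positive_op_reg_gram_inv[OF rho_pos, of "\<lambda>i. X i \<omega>" "Suc n"]
        inner_reg_gram_inv_Suc_last_le_1[OF rho_pos, of "\<lambda>i. X i \<omega>" n] less_imp_le[OF lam_pos],
        of ?u "\<epsilon> (Suc n) \<omega>"]
    by (simp only:)
  have "sqrt (inner (?I (Suc n) ?u) ?u) \<le> sqrt (inner (?I n ?u) ?u)"
    using inner_reg_gram_inv_Suc_le[OF rho_pos] by (rule real_sqrt_le_mono)
  moreover have "0 \<le> inner (?I (Suc n) ?u) ?u"
    using positive_opD(3)[OF positive_op_reg_gram_inv[OF rho_pos, of "\<lambda>i. X i \<omega>" "Suc n"], of ?u]
    by (simp only: inner_commute)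
  ultimately have "?A \<le> cosh_term n \<omega>"
    using lam_pos unfolding cosh_term_def wnorm2_def
    by (intro iffD2[OF cosh_real_nonneg_le_iff] mult_left_mono) auto
  then have "?A * (1 + leverage (Suc n) \<omega> * psi (Suc n) \<omega>) \<le> cosh_term n \<omega> * (1 + leverage (Suc n) \<omega> * psi (Suc n) \<omega>)"
    using leverage_nonneg psi_nonneg by (intro mult_right_mono) auto
  with step show ?thesis
    by linarith
qed

lemma discount_Suc_le:
  "ennreal (discount (Suc n) \<omega>) * (1 + e_term M F \<rho> X \<epsilon> lam (Suc n) \<omega>) \<le> ennreal (discount n \<omega>)"
proof (cases "compensator (Suc n) \<omega> = \<infinity>")
  case False
  define a where "a = enn2real (compensator n \<omega>)"
  define b where "b = enn2real (e_term M F \<rho> X \<epsilon> lam (Suc n) \<omega>)"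
  have sum: "compensator (Suc n) \<omega> = compensator n \<omega> + e_term M F \<rho> X \<epsilon> lam (Suc n) \<omega>"
    by (simp add: compensator_def)
  with False have "compensator n \<omega> \<noteq> \<infinity>" "e_term M F \<rho> X \<epsilon> lam (Suc n) \<omega> \<noteq> \<infinity>"
    by simp_all
  then have a: "compensator n \<omega> = ennreal a" and b: "e_term M F \<rho> X \<epsilon> lam (Suc n) \<omega> = ennreal b"
    by (simp_all add: a_def b_def less_top)
  have "0 \<le> a" "0 \<le> b"
    by (simp_all add: a_def b_def)
  have "(1 + b) * exp (- b) \<le> 1"
    using exp_ge_add_one_self[of b] by (simp add: exp_minus field_simps)
  then have "exp (- a) * ((1 + b) * exp (- b)) \<le> exp (- a)"
    by (simp add: mult_left_le)
  then have "exp (- (a + b)) * (1 + b) \<le> exp (- a)"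
    by (simp add: exp_add[symmetric] mult_ac)
  moreover have "ennreal (exp (- (a + b)) * (1 + b)) = ennreal (exp (- (a + b))) * (1 + ennreal b)"
    using \<open>0 \<le> b\<close> by (simp add: ennreal_mult)
  ultimately have "ennreal (exp (- (a + b))) * (1 + ennreal b) \<le> ennreal (exp (- a))"
    by (metis ennreal_leI)
  moreover have "compensator (Suc n) \<omega> = ennreal (a + b)"
    using sum a b \<open>0 \<le> a\<close> \<open>0 \<le> b\<close> by simp
  then have "enn2real (compensator (Suc n) \<omega>) = a + b"
    using \<open>0 \<le> a\<close> \<open>0 \<le> b\<close> by (simp del: ennreal_plus)
  ultimately show ?thesis
    using False a b \<open>0 \<le> a\<close> by (simp add: discount_def)
qed (simp add: discount_def)

lemma nn_cond_exp_compensated: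
  assumes [measurable]: "D \<in> borel_measurable (F n)" and D_nonneg: "\<And>\<omega>. 0 \<le> D \<omega>"
  shows "AE \<omega> in M. nn_cond_exp M (F n) (\<lambda>\<omega>. ennreal (D \<omega> * (1 + leverage (Suc n) \<omega> * psi (Suc n) \<omega>))) \<omega>
    = ennreal (D \<omega>) * (1 + e_term M F \<rho> X \<epsilon> lam (Suc n) \<omega>)"
proof -
  interpret sigma_finite_subalgebra M "F n"
    by (rule sigma_finite_subalgebra_F)
  let ?N = "nn_cond_exp M (F n)"
  have [measurable]: "leverage (Suc n) \<in> borel_measurable (F n)" "\<epsilon> (Suc n) \<in> borel_measurable M"
    using leverage_meas measurable_F_M[OF \<epsilon>_meas[of "Suc n"]] by auto
  have [measurable]: "leverage (Suc n) \<in> borel_measurable M" "D \<in> borel_measurable M"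
    using measurable_F_M[OF leverage_meas[of n]] measurable_F_M[OF assms(1)] by auto
  have [measurable]: "psi (Suc n) \<in> borel_measurable M"
    unfolding psi_def[abs_def] by measurable
  have pointwise: "ennreal (D \<omega> * (1 + leverage (Suc n) \<omega> * psi (Suc n) \<omega>))
      = ennreal (D \<omega>) * (1 + ennreal (leverage (Suc n) \<omega>) * ennreal (psi (Suc n) \<omega>))" for \<omega>
    using D_nonneg leverage_nonneg psi_nonneg by (simp add: ennreal_mult ennreal_plus)
  have "AE \<omega> in M. ennreal (D \<omega>) * ?N (\<lambda>\<omega>. 1 + ennreal (leverage (Suc n) \<omega>) * ennreal (psi (Suc n) \<omega>)) \<omega>
      = ?N (\<lambda>\<omega>. ennreal (D \<omega>) * (1 + ennreal (leverage (Suc n) \<omega>) * ennreal (psi (Suc n) \<omega>))) \<omega>"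
    by (rule nn_cond_exp_prod) measurable
  moreover have "AE \<omega> in M. ?N (\<lambda>_. 1) \<omega> + ?N (\<lambda>\<omega>. ennreal (leverage (Suc n) \<omega>) * ennreal (psi (Suc n) \<omega>)) \<omega>
      = ?N (\<lambda>\<omega>. 1 + ennreal (leverage (Suc n) \<omega>) * ennreal (psi (Suc n) \<omega>)) \<omega>"
    by (rule nn_cond_exp_sum) measurable
  moreover have "AE \<omega> in M. 1 = ?N (\<lambda>_. 1) \<omega>"
    by (rule nn_cond_exp_F_meas) measurable
  moreover have "AE \<omega> in M. ennreal (leverage (Suc n) \<omega>) * ?N (\<lambda>\<omega>. ennreal (psi (Suc n) \<omega>)) \<omega>
      = ?N (\<lambda>\<omega>. ennreal (leverage (Suc n) \<omega>) * ennreal (psi (Suc n) \<omega>)) \<omega>"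
    by (rule nn_cond_exp_prod) measurable
  ultimately show ?thesis
    by eventually_elim (simp add: e_term_eq pointwise)
qed

lemma S_proc_Suc_le:
  "S_proc M F \<rho> X \<epsilon> lam (Suc n) \<omega>
    \<le> discount (Suc n) \<omega> * cosh_term n \<omega> * (1 + leverage (Suc n) \<omega> * psi (Suc n) \<omega>)
      + discount (Suc n) \<omega> * drift n \<omega> * \<epsilon> (Suc n) \<omega>"
  using mult_left_mono[OF cosh_term_Suc_le discount_nonneg] by (simp add: S_proc_eq algebra_simps)

lemma compensated_le_S_proc:
  "ennreal (discount (Suc n) \<omega> * cosh_term n \<omega>) * (1 + e_term M F \<rho> X \<epsilon> lam (Suc n) \<omega>)
    \<le> ennreal (S_proc M F \<rho> X \<epsilon> lam n \<omega>)"
proof -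
  have "ennreal (discount (Suc n) \<omega> * cosh_term n \<omega>) * (1 + e_term M F \<rho> X \<epsilon> lam (Suc n) \<omega>)
      = ennreal (cosh_term n \<omega>) * (ennreal (discount (Suc n) \<omega>) * (1 + e_term M F \<rho> X \<epsilon> lam (Suc n) \<omega>))"
    by (simp add: discount_nonneg cosh_term_def ennreal_mult' mult.commute mult.left_commute)
  also have "\<dots> \<le> ennreal (cosh_term n \<omega>) * ennreal (discount n \<omega>)"
    by (rule mult_left_mono[OF discount_Suc_le]) simp
  also have "\<dots> = ennreal (S_proc M F \<rho> X \<epsilon> lam n \<omega>)"
    by (simp add: S_proc_eq discount_nonneg cosh_term_def ennreal_mult')
  finally show ?thesis .
qed

lemma S_proc_Suc_cond_exp_le:
  "AE \<omega> in M. nn_cond_exp M (F n) (\<lambda>\<omega>. ennreal (S_proc M F \<rho> X \<epsilon> lam (Suc n) \<omega>)) \<omega>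
     \<le> ennreal (S_proc M F \<rho> X \<epsilon> lam n \<omega>)"
proof -
  interpret sigma_finite_subalgebra M "F n"
    by (rule sigma_finite_subalgebra_F)
  let ?N = "nn_cond_exp M (F n)" and ?S = "S_proc M F \<rho> X \<epsilon> lam"
  define D where "D \<omega> = discount (Suc n) \<omega> * cosh_term n \<omega>" for \<omega>
  define Z where "Z \<omega> = D \<omega> * (1 + leverage (Suc n) \<omega> * psi (Suc n) \<omega>)" for \<omega>
  define h where "h \<omega> = discount (Suc n) \<omega> * drift n \<omega>" for \<omega>
  have D_meas [measurable]: "D \<in> borel_measurable (F n)" and h_meas [measurable]: "h \<in> borel_measurable (F n)"
    using discount_meas[of "Suc n" n] cosh_term_meas[of n] drift_meas[of n]
    unfolding D_def[abs_def] h_def[abs_def] by measurable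
  have [measurable]: "D \<in> borel_measurable M" "h \<in> borel_measurable M" "\<epsilon> (Suc n) \<in> borel_measurable M"
      "leverage (Suc n) \<in> borel_measurable M" "?S (Suc n) \<in> borel_measurable M"
    using measurable_F_M[OF D_meas] measurable_F_M[OF h_meas] measurable_F_M[OF \<epsilon>_meas[of "Suc n"]]
      measurable_F_M[OF leverage_meas[of n]] measurable_F_M[OF S_proc_meas] by auto
  have Z_meas [measurable]: "Z \<in> borel_measurable M"
    unfolding Z_def[abs_def] psi_def by measurable
  have D_nonneg: "0 \<le> D \<omega>" for \<omega>
    by (simp add: D_def discount_nonneg cosh_term_def)
  have Z_nonneg: "0 \<le> Z \<omega>" for \<omega>
    using D_nonneg leverage_nonneg psi_nonneg by (simp add: Z_def)
  have bound: "?S (Suc n) \<omega> \<le> Z \<omega> + h \<omega> * \<epsilon> (Suc n) \<omega>" for \<omega>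
    using S_proc_Suc_le by (simp add: D_def Z_def h_def)
  have "AE \<omega> in M. ?N (\<lambda>\<omega>. ennreal (?S (Suc n) \<omega>)) \<omega> \<le> ?N (\<lambda>\<omega>. ennreal (Z \<omega> + h \<omega> * \<epsilon> (Suc n) \<omega>)) \<omega>"
    by (rule nn_cond_exp_mono) (use bound in \<open>auto intro: ennreal_leI\<close>)
  moreover have "AE \<omega> in M. ?N (\<lambda>\<omega>. ennreal (Z \<omega> + h \<omega> * \<epsilon> (Suc n) \<omega>)) \<omega> = ?N (\<lambda>\<omega>. ennreal (Z \<omega>)) \<omega>"
    by (rule nn_cond_exp_add_martingale_increment[OF Z_meas h_meas])
      (use \<epsilon>_integrable[of "Suc n"] \<epsilon>_cond_exp[of "Suc n"] Z_nonneg order_trans[OF S_proc_nonneg bound] in simp_all)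
  moreover have "AE \<omega> in M. ?N (\<lambda>\<omega>. ennreal (Z \<omega>)) \<omega> = ennreal (D \<omega>) * (1 + e_term M F \<rho> X \<epsilon> lam (Suc n) \<omega>)"
    unfolding Z_def by (rule nn_cond_exp_compensated[OF D_meas D_nonneg])
  ultimately show ?thesis
  proof eventually_elim
    case (elim \<omega>)
    note elim(1)
    also note elim(2)
    also note elim(3)
    also note compensated_le_S_proc[of n \<omega>, folded D_def]
    finally show ?case .
  qed
qed

lemma nn_integral_S_proc_le_1: "(\<integral>\<^sup>+\<omega>. ennreal (S_proc M F \<rho> X \<epsilon> lam t \<omega>) \<partial>M) \<le> 1"
proof (induction t)
  case 0
  have "S_proc M F \<rho> X \<epsilon> lam 0 \<omega> = 1" for \<omega>
    by (simp add: S_proc_eq cosh_term_def wnorm2_def Mvec_def discount_def compensator_def)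
  then show ?case
    using prob_space.emeasure_space_1[OF prob_space] by simp
next
  case (Suc n)
  interpret sigma_finite_subalgebra M "F n"
    by (rule sigma_finite_subalgebra_F)
  have [measurable]: "S_proc M F \<rho> X \<epsilon> lam t \<in> borel_measurable M" for t
    by (rule measurable_F_M[OF S_proc_meas])
  have "(\<integral>\<^sup>+\<omega>. ennreal (S_proc M F \<rho> X \<epsilon> lam (Suc n) \<omega>) \<partial>M)
      = (\<integral>\<^sup>+\<omega>. 1 * nn_cond_exp M (F n) (\<lambda>\<omega>. ennreal (S_proc M F \<rho> X \<epsilon> lam (Suc n) \<omega>)) \<omega> \<partial>M)"
    using nn_cond_exp_intg[of "\<lambda>_. 1"] by simp
  also have "\<dots> \<le> (\<integral>\<^sup>+\<omega>. ennreal (S_proc M F \<rho> X \<epsilon> lam n \<omega>) \<partial>M)"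
    using S_proc_Suc_cond_exp_le[of n] by (intro nn_integral_mono_AE) auto
  finally show ?case
    using Suc.IH by simp
qed

lemma integrable_S_proc: "integrable M (S_proc M F \<rho> X \<epsilon> lam t)"
  using measurable_F_M[OF S_proc_meas] S_proc_nonneg nn_integral_S_proc_le_1[of t]
  by (intro integrableI_nonneg) (auto simp: le_less_trans)

lemma S_proc_nn_cond_exp_le:
  "AE \<omega> in M. nn_cond_exp M (F s) (\<lambda>\<omega>. ennreal (S_proc M F \<rho> X \<epsilon> lam (s + k) \<omega>)) \<omega>
    \<le> ennreal (S_proc M F \<rho> X \<epsilon> lam s \<omega>)"
proof (induction k)
  case 0
  interpret sigma_finite_subalgebra M "F s"
    by (rule sigma_finite_subalgebra_F)
  have [measurable]: "S_proc M F \<rho> X \<epsilon> lam s \<in> borel_measurable (F s)"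
    by (rule S_proc_meas)
  have "AE \<omega> in M. ennreal (S_proc M F \<rho> X \<epsilon> lam s \<omega>)
      = nn_cond_exp M (F s) (\<lambda>\<omega>. ennreal (S_proc M F \<rho> X \<epsilon> lam s \<omega>)) \<omega>"
    by (rule nn_cond_exp_F_meas) measurable
  then show ?case
    by auto
next
  case (Suc k)
  interpret sigma_finite_subalgebra M "F s"
    by (rule sigma_finite_subalgebra_F)
  let ?f = "\<lambda>\<omega>. ennreal (S_proc M F \<rho> X \<epsilon> lam (Suc (s + k)) \<omega>)"
  have [measurable]: "S_proc M F \<rho> X \<epsilon> lam t \<in> borel_measurable M" for t
    by (rule measurable_F_M[OF S_proc_meas])
  have "subalgebra (F (s + k)) (F s)"
    using filtration subalgebra_F[of s] subalgebra_F[of "s + k"] by (auto simp: is_filtration_def subalgebra_def)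
  then have "AE \<omega> in M. nn_cond_exp M (F s) ?f \<omega> = nn_cond_exp M (F s) (nn_cond_exp M (F (s + k)) ?f) \<omega>"
    by (intro nn_cond_exp_nested_subalg[OF subalgebra_F]) auto
  moreover have "AE \<omega> in M. nn_cond_exp M (F s) (nn_cond_exp M (F (s + k)) ?f) \<omega>
      \<le> nn_cond_exp M (F s) (\<lambda>\<omega>. ennreal (S_proc M F \<rho> X \<epsilon> lam (s + k) \<omega>)) \<omega>"
    by (rule nn_cond_exp_mono[OF S_proc_Suc_cond_exp_le]) auto
  ultimately show ?case
    using Suc.IH by eventually_elim simp
qed

lemma S_proc_cond_exp_le:
  assumes "s \<le> t"
  shows "AE \<omega> in M. real_cond_exp M (F s) (S_proc M F \<rho> X \<epsilon> lam t) \<omega> \<le> S_proc M F \<rho> X \<epsilon> lam s \<omega>"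
proof -
  obtain k where t: "t = s + k"
    using assms le_Suc_ex by blast
  show ?thesis
    using S_proc_nn_cond_exp_le[of s k]
  proof eventually_elim
    case (elim \<omega>)
    have "enn2real (nn_cond_exp M (F s) (\<lambda>\<omega>. ennreal (S_proc M F \<rho> X \<epsilon> lam t \<omega>)) \<omega>)
        \<le> S_proc M F \<rho> X \<epsilon> lam s \<omega>"
      using elim S_proc_nonneg unfolding t by (intro enn2real_leI) auto
    moreover have "0 \<le> enn2real (nn_cond_exp M (F s) (\<lambda>\<omega>. ennreal (- S_proc M F \<rho> X \<epsilon> lam t \<omega>)) \<omega>)"
      by simp
    ultimately show ?case
      unfolding real_cond_exp_def by linarith
  qed
qed

end

theorem theorem1:
  fixes M :: "'a measure" and F :: "nat \<Rightarrow> 'a measure"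
    and X :: "nat \<Rightarrow> 'a \<Rightarrow> 'h::{real_inner, complete_space, second_countable_topology}"
    and \<epsilon> :: "nat \<Rightarrow> 'a \<Rightarrow> real" and \<rho> lam :: real
  assumes "prob_space M"
    and "is_filtration M F"
    and "\<And>t. t \<ge> 1 \<Longrightarrow> X t \<in> borel_measurable (F (t - 1))"
    and "\<And>t. t \<ge> 1 \<Longrightarrow> \<epsilon> t \<in> borel_measurable (F t)"
    and "\<And>t. t \<ge> 1 \<Longrightarrow> integrable M (\<epsilon> t)"
    and "\<And>t. t \<ge> 1 \<Longrightarrow> AE \<omega> in M. real_cond_exp M (F (t - 1)) (\<epsilon> t) \<omega> = 0"
    and "\<rho> > 0" and "lam > 0"
  shows "supermartingale M F (S_proc M F \<rho> X \<epsilon> lam)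
         \<and> (\<forall>t \<omega>. 0 \<le> S_proc M F \<rho> X \<epsilon> lam t \<omega>)"
proof -
  interpret self_normalized_setting M F X \<epsilon> \<rho> lam
    using assms by (intro self_normalized_setting.intro) auto
  show ?thesis
    unfolding supermartingale_def
    using S_proc_meas integrable_S_proc S_proc_cond_exp_le S_proc_nonneg by blast
qed

end
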